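(* In the setting of the context (with $n_i\ge6$ for all $i$), $$\mathbb E(C_5)=\operatorname{tr}((\boldsymbol T\boldsymbol V_N)^3),\qquad \operatorname{Var}(C_5)\le\frac{\prod_{i=1}^a\binom{n_i}{6}-\prod_{i=1}^a\binom{n_i-6}{6}}{\prod_{i=1}^a\binom{n_i}6}\cdot27\operatorname{tr}^3((\boldsymbol T\boldsymbol V_N)^2).$$
   Context: Let $a,d\in\mathbb N$, $n_1,\dots,n_a\in\mathbb N$, $N=\sum_i n_i$. Observations $\boldsymbol X_{i,j}\sim\mathcal N_d(\boldsymbol\mu_i,\boldsymbol\Sigma_i)$, $j=1,\dots,n_i$, $i=1,\dots,a$, mutually independent, $\boldsymbol\Sigma_i$ symmetric positive definite. Let $\boldsymbol T=\boldsymbol T_W\otimes\boldsymbol T_S$ with $\boldsymbol T_W\in\mathbb R^{a\times a}$, $\boldsymbol T_S\in\mathbb R^{d\times d}$ symmetric idempotent, and $\boldsymbol V_N=\bigoplus_{i=1}^a\frac N{n_i}\boldsymbol\Sigma_i$. For indices with $\ell_{2i-1}\ne\ell_{2i}$ in $\{1,\dots,n_i\}$ define $\boldsymbol Z_{(\ell_1,\dots,\ell_{2a})}=(\sqrt{N/n_1}(\boldsymbol X_{1,\ell_1}-\boldsymbol X_{1,\ell_2})^\top,\dots,\sqrt{N/n_a}(\boldsymbol X_{a,\ell_{2a-1}}-\boldsymbol X_{a,\ell_{2a}})^\top)^\top$. For each $i$ let $\ell_{1,i},\dots,\ell_{6,i}$ be pairwise distinct in $\{1,\dots,n_i\}$;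 put $\boldsymbol Z^{(12)}=\boldsymbol Z_{(\ell_{1,1},\ell_{2,1},\dots,\ell_{1,a},\ell_{2,a})}$, $\boldsymbol Z^{(34)}=\boldsymbol Z_{(\ell_{3,1},\ell_{4,1},\dots,\ell_{3,a},\ell_{4,a})}$, $\boldsymbol Z^{(56)}=\boldsymbol Z_{(\ell_{5,1},\ell_{6,1},\dots,\ell_{5,a},\ell_{6,a})}$, $\Lambda_1=\boldsymbol Z^{(12)\top}\boldsymbol T\boldsymbol Z^{(34)}$, $\Lambda_2=\boldsymbol Z^{(34)\top}\boldsymbol T\boldsymbol Z^{(56)}$, $\Lambda_3=\boldsymbol Z^{(56)\top}\boldsymbol T\boldsymbol Z^{(12)}$, and $$C_5=\frac{1}{8\prod_{i=1}^a\frac{n_i!}{(n_i-6)!}}\sum\Lambda_1\Lambda_2\Lambda_3,$$ the sum running, for every $i$, over all ordered 6-tuples of pairwise distinct elements of $\{1,\dots,n_i\}$. $\operatorname{tr}^k$ denotes the $k$-th power of the trace. *)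

theory Defs
  imports "HOL-Probability.Probability"
begin

definition sym_pos_def_mat :: "real^'d^'d \<Rightarrow> bool" where
  "sym_pos_def_mat S \<longleftrightarrow> transpose S = S \<and> (\<forall>x. x \<noteq> 0 \<longrightarrow> x \<bullet> (S *v x) > 0)"

definition sym_idem_mat :: "real^'d^'d \<Rightarrow> bool" where
  "sym_idem_mat A \<longleftrightarrow> transpose A = A \<and> A ** A = A"

definition mvn_density :: "real^'d \<Rightarrow> real^'d^'d \<Rightarrow> real^'d \<Rightarrow> real" where
  "mvn_density mu S x =
     exp (- ((x - mu) \<bullet> (matrix_inv S *v (x - mu))) / 2) / sqrt ((2 * pi) ^ CARD('d) * det S)"

definition kron :: "real^'g^'g \<Rightarrow> real^'d^'d \<Rightarrow> real^('g \<times> 'd)^('g \<times> 'd)" where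
  "kron A B = (\<chi> p q. A $ fst p $ fst q * B $ snd p $ snd q)"

definition VN :: "('g::finite \<Rightarrow> nat) \<Rightarrow> ('g \<Rightarrow> real^'d^'d) \<Rightarrow> real^('g \<times> 'd)^('g \<times> 'd)" where
  "VN n S = (\<chi> p q. if fst p = fst q
       then real (\<Sum>i\<in>UNIV. n i) / real (n (fst p)) * S (fst p) $ snd p $ snd q else 0)"

text \<open>Index set: for every group i an ordered 6-tuple (positions 0..5) of pairwise distinct
  indices in {0..<n i} (observations are indexed from 0).\<close>
definition six_tuples :: "('g::finite \<Rightarrow> nat) \<Rightarrow> ('g \<Rightarrow> nat \<Rightarrow> nat) set" where
  "six_tuples n = PiE UNIV (\<lambda>i. {f \<in> {..<6::nat} \<rightarrow>\<^sub>E {..<n i}. inj_on f {..<6}})"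

definition Zblk :: "('g::finite \<Rightarrow> nat) \<Rightarrow> ('g \<Rightarrow> nat \<Rightarrow> 'w \<Rightarrow> real^'d)
     \<Rightarrow> ('g \<Rightarrow> nat \<Rightarrow> nat) \<Rightarrow> nat \<Rightarrow> nat \<Rightarrow> 'g \<Rightarrow> 'w \<Rightarrow> real^'d" where
  "Zblk n X l p q i w = sqrt (real (\<Sum>k\<in>UNIV. n k) / real (n i)) *\<^sub>R (X i (l i p) w - X i (l i q) w)"

text \<open>The bilinear form Z^(pq)^T (T_W \<otimes> T_S) Z^(rs), written out blockwise.\<close>
definition Lam :: "('g::finite \<Rightarrow> nat) \<Rightarrow> ('g \<Rightarrow> nat \<Rightarrow> 'w \<Rightarrow> real^'d::finite) \<Rightarrow> real^'g^'g \<Rightarrow> real^'d^'d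
     \<Rightarrow> ('g \<Rightarrow> nat \<Rightarrow> nat) \<Rightarrow> nat \<Rightarrow> nat \<Rightarrow> nat \<Rightarrow> nat \<Rightarrow> 'w \<Rightarrow> real" where
  "Lam n X TW TS l p q r s w =
     (\<Sum>i\<in>UNIV. \<Sum>j\<in>UNIV. TW $ i $ j * (Zblk n X l p q i w \<bullet> (TS *v Zblk n X l r s j w)))"

definition C5 :: "('g::finite \<Rightarrow> nat) \<Rightarrow> ('g \<Rightarrow> nat \<Rightarrow> 'w \<Rightarrow> real^'d::finite) \<Rightarrow> real^'g^'g \<Rightarrow> real^'d^'d
     \<Rightarrow> 'w \<Rightarrow> real" where
  "C5 n X TW TS w =
     1 / (8 * (\<Prod>i\<in>UNIV. fact (n i) / fact (n i - 6))) *
     (\<Sum>l\<in>six_tuples n. Lam n X TW TS l 0 1 2 3 w * Lam n X TW TS l 2 3 4 5 w * Lam n X TW TS l 4 5 0 1 w)"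

end

(* Each summand Lambda1 Lambda2 Lambda3 of C5 is the cyclic form a'Tb * b'Tc * c'Ta of the
   three vectors Z(12), Z(34), Z(56). They are built from disjoint sets of observations, hence
   independent, and each has the moments up to order four of N(0, 2 V_N), which are read off
   from the moment generating function of the normal distribution. Integrating out one vector
   at a time gives E = tr((2 T V_N)^3) = 8 tr((T V_N)^3). The Gaussian bound
   E[(u'x)^2 (v'x)^2] <= 3 (u'Ku)(v'Kv), applied three times with Tonelli, gives
   E[(Lambda1 Lambda2 Lambda3)^2] <= 27 tr((2 T V_N)^2)^3. Summands whose index tuples are
   disjoint in every group are independent, so only the remaining pairs of tuples, a fraction
   (prod C(n_i,6) - prod C(n_i-6,6)) / prod C(n_i,6) of all pairs, contribute to the variance,
   each by at most this second moment. *)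

theory Submission
  imports Defs
begin

section \<open>The multivariate normal distribution and its moments\<close>

lemma sym_pos_def_mat_invertible:
  fixes S :: "real^'d^'d"
  assumes "sym_pos_def_mat S"
  shows "invertible S"
proof -
  have "x = 0" if "S *v x = 0" for x
    using assms that unfolding sym_pos_def_mat_def by (metis inner_zero_right less_irrefl)
  then show ?thesis using matrix_left_invertible_ker invertible_left_inverse by blast
qed

lemma matrix_inv_inverse:
  fixes S :: "real^'d^'d"
  assumes "invertible S"
  shows "S ** matrix_inv S = mat 1" and "matrix_inv S ** S = mat 1"
proof -
  have "\<exists>A'. S ** A' = mat 1 \<and> A' ** S = mat 1" using assms unfolding invertible_def by blast
  then have "S ** matrix_inv S = mat 1 \<and> matrix_inv S ** S = mat 1"
    unfolding matrix_inv_def by (rule someI_ex)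
  then show "S ** matrix_inv S = mat 1" and "matrix_inv S ** S = mat 1" by auto
qed

lemma transpose_matrix_inv_sym:
  fixes S :: "real^'d^'d"
  assumes "invertible S" and "transpose S = S"
  shows "transpose (matrix_inv S) = matrix_inv S"
proof -
  let ?Q = "matrix_inv S"
  have QS: "transpose ?Q ** S = mat 1"
    using matrix_inv_inverse(1)[OF assms(1)] assms(2) by (metis matrix_transpose_mul transpose_mat)
  have "transpose ?Q = transpose ?Q ** (S ** ?Q)" using matrix_inv_inverse(1)[OF assms(1)] by simp
  also have "\<dots> = ?Q" by (simp add: matrix_mul_assoc QS)
  finally show ?thesis .
qed

lemma inner_sym_matrix_swap:
  fixes Q :: "real^'d^'d"
  assumes "transpose Q = Q"
  shows "x \<bullet> (Q *v y) = (Q *v x) \<bullet> y"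
  by (metis assms dot_lmul_matrix transpose_matrix_vector)

lemma inner_transpose_matrix: "(u::real^'m) \<bullet> (A *v x) = (transpose A *v u) \<bullet> x"
  by (metis dot_lmul_matrix inner_commute transpose_transpose vector_transpose_matrix)

lemma quadratic_form_shift:
  fixes Q S :: "real^'d^'d"
  assumes "transpose Q = Q" and "transpose S = S" and "Q ** S = mat 1"
  shows "(y - t *\<^sub>R (S *v u)) \<bullet> (Q *v (y - t *\<^sub>R (S *v u)))
       = y \<bullet> (Q *v y) - 2 * t * (u \<bullet> y) + t^2 * (u \<bullet> (S *v u))"
proof -
  have QS: "Q *v (S *v u) = u" by (simp add: matrix_vector_mul_assoc assms(3))
  have "(S *v u) \<bullet> (Q *v y) = u \<bullet> y"
    using inner_sym_matrix_swap[OF assms(1)] QS by (metis inner_commute)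
  moreover have "y \<bullet> (Q *v (S *v u)) = u \<bullet> y" and "(S *v u) \<bullet> (Q *v (S *v u)) = u \<bullet> (S *v u)"
    using QS by (simp_all add: inner_commute)
  ultimately show ?thesis
    by (simp add: matrix_vector_mult_diff_distrib matrix_vector_right_distrib inner_diff_left
        inner_diff_right power2_eq_square algebra_simps matrix_vector_mult_scaleR)
qed

lemma borel_measurable_matrix_vector_mult [measurable]:
  fixes A :: "real^'n^'m"
  assumes [measurable]: "f \<in> borel_measurable N"
  shows "(\<lambda>x. A *v f x) \<in> borel_measurable N"
proof -
  have "(\<lambda>x. A *v x) \<in> borel_measurable borel"
    by (intro borel_measurable_continuous_onI linear_continuous_on matrix_vector_mul_bounded_linear)
  from measurable_comp[OF assms this] show ?thesis by (simp add: comp_def)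
qed

lemma mvn_density_exp_tilt:
  fixes S :: "real^'d^'d"
  assumes "sym_pos_def_mat S"
  shows "exp (t * (u \<bullet> (x - mu))) * mvn_density mu S x
       = exp (t^2 * (u \<bullet> (S *v u)) / 2) * mvn_density mu S (x - t *\<^sub>R (S *v u))"
proof -
  have inv: "invertible S" using sym_pos_def_mat_invertible[OF assms] .
  have sS: "transpose S = S" using assms unfolding sym_pos_def_mat_def by simp
  let ?Q = "matrix_inv S"
  have q: "((x - mu) - t *\<^sub>R (S *v u)) \<bullet> (?Q *v ((x - mu) - t *\<^sub>R (S *v u)))
       = (x - mu) \<bullet> (?Q *v (x - mu)) - 2 * t * (u \<bullet> (x - mu)) + t^2 * (u \<bullet> (S *v u))"
    by (rule quadratic_form_shift[OF transpose_matrix_inv_sym[OF inv sS] sS matrix_inv_inverse(2)[OF inv]])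
  have "exp (t * (u \<bullet> (x - mu))) * exp (- ((x - mu) \<bullet> (?Q *v (x - mu))) / 2)
     = exp (t^2 * (u \<bullet> (S *v u)) / 2)
       * exp (- (((x - mu) - t *\<^sub>R (S *v u)) \<bullet> (?Q *v ((x - mu) - t *\<^sub>R (S *v u)))) / 2)"
    unfolding q mult_exp_exp by (intro arg_cong[where f=exp]) (simp add: field_simps)
  moreover have "x - t *\<^sub>R (S *v u) - mu = (x - mu) - t *\<^sub>R (S *v u)" by simp
  ultimately show ?thesis unfolding mvn_density_def by (simp add: field_simps)
qed

lemma nn_integral_lborel_translate:
  fixes f :: "'a::euclidean_space \<Rightarrow> ennreal"
  assumes [measurable]: "f \<in> borel_measurable borel"
  shows "(\<integral>\<^sup>+x. f (x + c) \<partial>lborel) = (\<integral>\<^sup>+x. f x \<partial>lborel)"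
proof -
  have "lborel = density (distr lborel borel (\<lambda>x. c + 1 *\<^sub>R x)) (\<lambda>_. \<bar>1::real\<bar>^DIM('a))"
    by (rule lborel_affine) simp
  then have L: "lborel = distr lborel (borel :: 'a measure) (\<lambda>x. c + x)" by (simp add: density_1)
  have "(\<integral>\<^sup>+x. f x \<partial>lborel) = (\<integral>\<^sup>+x. f x \<partial>distr lborel borel (\<lambda>x. c + x))"
    by (subst L[symmetric]) simp
  also have "\<dots> = (\<integral>\<^sup>+x. f (c + x) \<partial>lborel)"
    by (subst nn_integral_distr) auto
  finally show ?thesis by (simp add: add.commute)
qed

lemma borel_measurable_mvn_density [measurable]: "mvn_density mu S \<in> borel_measurable borel"
  unfolding mvn_density_def by measurable

lemma nn_integral_mvn_density_eq_1:
  assumes "prob_space M" and "distributed M lborel X (\<lambda>x. ennreal (mvn_density mu S x))"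
  shows "(\<integral>\<^sup>+x. ennreal (mvn_density mu S x) \<partial>lborel) = 1"
proof -
  interpret prob_space M by fact
  have [measurable]: "X \<in> borel_measurable M" using assms(2) by (auto simp: distributed_def)
  have "distr M lborel X = density lborel (\<lambda>x. ennreal (mvn_density mu S x))"
    using assms(2) by (simp add: distributed_distr_eq_density)
  moreover have "emeasure (distr M lborel X) UNIV = 1"
    by (subst emeasure_distr) (auto simp: emeasure_space_1)
  ultimately show ?thesis by (simp add: emeasure_density)
qed

lemma mvn_mgf:
  fixes X :: "'w \<Rightarrow> real^'d" and S :: "real^'d^'d"
  assumes "prob_space M" and S: "sym_pos_def_mat S"
    and D: "distributed M lborel X (\<lambda>x. ennreal (mvn_density mu S x))"
  shows "(\<integral>\<^sup>+w. ennreal (exp (t * (u \<bullet> (X w - mu)))) \<partial>M) = ennreal (exp (t^2 * (u \<bullet> (S *v u)) / 2))"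
proof -
  let ?f = "mvn_density mu S" and ?c = "t *\<^sub>R (S *v u)" and ?e = "exp (t^2 * (u \<bullet> (S *v u)) / 2)"
  have "(\<integral>\<^sup>+w. ennreal (exp (t * (u \<bullet> (X w - mu)))) \<partial>M)
      = (\<integral>\<^sup>+x. ennreal (?f x) * ennreal (exp (t * (u \<bullet> (x - mu)))) \<partial>lborel)"
    by (rule distributed_nn_integral[OF D, symmetric]) simp
  also have "\<dots> = (\<integral>\<^sup>+x. ennreal ?e * ennreal (?f (x + (- ?c))) \<partial>lborel)"
  proof (rule nn_integral_cong)
    fix x
    have "?f x * exp (t * (u \<bullet> (x - mu))) = ?e * ?f (x + (- ?c))"
      using mvn_density_exp_tilt[OF S, of t u x mu] by (simp add: mult.commute)
    then show "ennreal (?f x) * ennreal (exp (t * (u \<bullet> (x - mu)))) = ennreal ?e * ennreal (?f (x + (- ?c)))"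
      by (simp flip: ennreal_mult' ennreal_mult'')
  qed
  also have "\<dots> = ennreal ?e * (\<integral>\<^sup>+x. ennreal (?f (x + (- ?c))) \<partial>lborel)"
    by (rule nn_integral_cmult) simp
  also have "(\<integral>\<^sup>+x. ennreal (?f (x + (- ?c))) \<partial>lborel) = 1"
    using nn_integral_lborel_translate[of "\<lambda>x. ennreal (?f x)" "- ?c"]
      nn_integral_mvn_density_eq_1[OF assms(1) D] by simp
  finally show ?thesis by simp
qed

lemma powser_coeff_zero:
  fixes c :: "nat \<Rightarrow> real"
  assumes S: "\<And>t. (\<lambda>n. c n * t^n) sums 0"
  shows "c n = 0"
proof (induction n rule: less_induct)
  case (less n)
  have "(\<lambda>i. c (i + n) * t^i) sums 0" if t: "t \<noteq> 0" for t :: real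
  proof -
    have "(\<lambda>i. c (i + n) * t^(i + n)) sums (0 - (\<Sum>i<n. c i * t^i))"
      by (rule sums_split_initial_segment[OF S])
    also have "(\<Sum>i<n. c i * t^i) = 0" using less by simp
    finally have "(\<lambda>i. c (i + n) * t^(i + n) / t^n) sums (0 / t^n)"
      by (intro sums_divide) simp
    moreover have "c (i + n) * t^(i + n) / t^n = c (i + n) * t^i" for i
      using t by (simp add: power_add)
    ultimately show ?thesis by simp
  qed
  then have "((\<lambda>_. 0::real) \<longlongrightarrow> c (0 + n)) (at (0::real))"
    by (intro powser_limit_0_strong[of "1::real" "\<lambda>i. c (i + n)"]) auto
  then show ?case using LIM_const_eq by fastforce
qed

lemma powser_coeff_unique:
  fixes a b :: "nat \<Rightarrow> real"
  assumes "\<And>t. (\<lambda>n. a n * t^n) sums f t" and "\<And>t. (\<lambda>n. b n * t^n) sums f t"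
  shows "a n = b n"
proof -
  have "(\<lambda>n. (a n - b n) * t^n) sums 0" for t
    using sums_diff[OF assms(1)[of t] assms(2)[of t]] by (simp add: algebra_simps)
  from powser_coeff_zero[OF this] show ?thesis by simp
qed

lemma exp_sums_real: "(\<lambda>n. y^n / fact n) sums exp (y::real)"
  using exp_converges[of y] by (simp add: divide_inverse mult.commute)

lemma abs_exp_partial_sum_le: "\<bar>\<Sum>n<N. (y::real)^n / fact n\<bar> \<le> exp \<bar>y\<bar>"
proof -
  have "\<bar>\<Sum>n<N. y^n / fact n\<bar> \<le> (\<Sum>n<N. \<bar>y\<bar>^n / fact n)"
    by (rule order.trans[OF sum_abs]) (simp add: power_abs)
  also have "\<dots> \<le> (\<Sum>n. \<bar>y\<bar>^n / fact n)"
    by (rule sum_le_suminf) (auto intro: sums_summable[OF exp_sums_real])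
  also have "\<dots> = exp \<bar>y\<bar>" using sums_unique[OF exp_sums_real[of "\<bar>y\<bar>"]] by simp
  finally show ?thesis .
qed

lemma power_div_fact_le_exp: "\<bar>x::real\<bar>^k / fact k \<le> exp \<bar>x\<bar>"
proof -
  have "(\<Sum>n\<in>{k}. \<bar>x\<bar>^n / fact n) \<le> (\<Sum>n. \<bar>x\<bar>^n / fact n)"
    by (rule sum_le_suminf) (auto intro: sums_summable[OF exp_sums_real])
  then show ?thesis using sums_unique[OF exp_sums_real[of "\<bar>x\<bar>"]] by simp
qed

definition gaussian_moment :: "nat \<Rightarrow> real \<Rightarrow> real" where
  "gaussian_moment k s = (if even k then fact k / fact (k div 2) * (s / 2) ^ (k div 2) else 0)"

lemma gaussian_moment_0_to_4 [simp]:
  "gaussian_moment 0 s = 1" "gaussian_moment 1 s = 0" "gaussian_moment (Suc 0) s = 0"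
  "gaussian_moment 2 s = s"
  "gaussian_moment 3 s = 0" "gaussian_moment 4 s = 3 * s^2"
  by (simp_all add: gaussian_moment_def fact_numeral power2_eq_square)

lemma sums_gaussian_moment: "(\<lambda>k. gaussian_moment k s / fact k * t^k) sums exp (t^2 * s / 2)"
proof -
  have "(\<lambda>k. if even k then (t^2 * s / 2)^(k div 2) / fact (k div 2) else 0) sums exp (t^2 * s / 2)"
    using sums_if[OF sums_zero exp_sums_real, of "t^2 * s / 2"] by simp
  moreover have "(if even k then (t^2 * s / 2)^(k div 2) / fact (k div 2) else 0)
      = gaussian_moment k s / fact k * t^k" for k
    by (cases "even k") (auto simp: gaussian_moment_def power_mult_distrib field_simps simp flip: power_mult)
  ultimately show ?thesis by simp
qed

context finite_measure
begin

lemma integrable_exp_abs_of_integrable_exp: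
  fixes W :: "'a \<Rightarrow> real"
  assumes [measurable]: "W \<in> borel_measurable M" and "\<And>t. integrable M (\<lambda>w. exp (t * W w))"
  shows "integrable M (\<lambda>w. exp \<bar>t * W w\<bar>)"
proof (rule Bochner_Integration.integrable_bound)
  show "integrable M (\<lambda>w. exp (t * W w) + exp (- t * W w))"
    using assms(2)[of t] assms(2)[of "- t"] by simp
  have "exp \<bar>y\<bar> \<le> exp y + exp (- y)" for y :: real
    by (cases "y \<ge> 0") (auto simp: add_increasing2 add_increasing)
  then show "AE w in M. norm (exp \<bar>t * W w\<bar>) \<le> norm (exp (t * W w) + exp (- t * W w))"
    by (intro AE_I2) (simp add: add_pos_pos)
qed simp

lemma integrable_power_of_integrable_exp:
  fixes W :: "'a \<Rightarrow> real"
  assumes [measurable]: "W \<in> borel_measurable M" and "\<And>t. integrable M (\<lambda>w. exp (t * W w))"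
  shows "integrable M (\<lambda>w. W w ^ k)"
proof (rule Bochner_Integration.integrable_bound)
  show "integrable M (\<lambda>w. fact k * exp \<bar>1 * W w\<bar>)"
    using integrable_exp_abs_of_integrable_exp[OF assms, where t=1] by simp
  have "\<bar>W w\<bar>^k \<le> fact k * exp \<bar>W w\<bar>" for w
    using power_div_fact_le_exp[of "W w" k] by (simp add: field_simps)
  then show "AE w in M. norm (W w ^ k) \<le> norm (fact k * exp \<bar>1 * W w\<bar>)"
    by (intro AE_I2) (simp add: power_abs)
qed simp

text \<open>Termwise integration of the exponential series, by dominated convergence with
  dominating function \<open>exp \<bar>t W\<bar>\<close>.\<close>

lemma sums_moments_of_integrable_exp:
  fixes W :: "'a \<Rightarrow> real"
  assumes [measurable]: "W \<in> borel_measurable M" and "\<And>t. integrable M (\<lambda>w. exp (t * W w))"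
  shows "(\<lambda>k. (\<integral>w. W w ^ k \<partial>M) / fact k * t^k) sums (\<integral>w. exp (t * W w) \<partial>M)"
proof -
  note ipow = integrable_power_of_integrable_exp[OF assms]
  let ?s = "\<lambda>N w. \<Sum>k<N. (t * W w)^k / fact k"
  have "(\<lambda>N. \<integral>w. ?s N w \<partial>M) \<longlonglongrightarrow> (\<integral>w. exp (t * W w) \<partial>M)"
  proof (rule integral_dominated_convergence[where w="\<lambda>w. exp \<bar>t * W w\<bar>"])
    show "AE w in M. (\<lambda>N. ?s N w) \<longlonglongrightarrow> exp (t * W w)"
      using exp_sums_real unfolding sums_def by simp
    show "AE w in M. norm (?s N w) \<le> exp \<bar>t * W w\<bar>" for N
      using abs_exp_partial_sum_le by simp
  qed (auto intro: integrable_exp_abs_of_integrable_exp[OF assms])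
  moreover have "(\<integral>w. ?s N w \<partial>M) = (\<Sum>k<N. (\<integral>w. W w ^ k \<partial>M) / fact k * t^k)" for N
    by (subst Bochner_Integration.integral_sum)
      (auto simp: power_mult_distrib field_simps intro!: ipow sum.cong)
  ultimately show ?thesis unfolding sums_def by simp
qed

end

lemma (in prob_space) gaussian_moments_of_mgf:
  fixes W :: "'a \<Rightarrow> real"
  assumes [measurable]: "W \<in> borel_measurable M"
    and mgf: "\<And>t. (\<integral>\<^sup>+w. ennreal (exp (t * W w)) \<partial>M) = ennreal (exp (t^2 * s / 2))"
  shows "integrable M (\<lambda>w. W w ^ k)" and "(\<integral>w. W w ^ k \<partial>M) = gaussian_moment k s"
proof -
  have ie: "integrable M (\<lambda>w. exp (t * W w))" for t
    by (rule integrableI_nonneg) (auto simp: mgf)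
  then show "integrable M (\<lambda>w. W w ^ k)" by (rule integrable_power_of_integrable_exp[OF assms(1)])
  have "(\<integral>w. exp (t * W w) \<partial>M) = exp (t^2 * s / 2)" for t
    using nn_integral_eq_integral[OF ie, of t] mgf[of t] by (simp add: integral_nonneg_AE)
  then have "(\<lambda>k. (\<integral>w. W w ^ k \<partial>M) / fact k * t^k) sums exp (t^2 * s / 2)" for t
    using sums_moments_of_integrable_exp[OF assms(1) ie] by simp
  from powser_coeff_unique[OF this sums_gaussian_moment]
  show "(\<integral>w. W w ^ k \<partial>M) = gaussian_moment k s" by simp
qed

section \<open>Random vectors with Gaussian moments up to order four\<close>

text \<open>Only moments up to order four enter the mean and the variance of \<open>C\<^sub>5\<close>, so these
  are all that is tracked through linear maps and independent sums.\<close>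

definition gaussian_moments4 :: "'a measure \<Rightarrow> ('a \<Rightarrow> real) \<Rightarrow> real \<Rightarrow> bool" where
  "gaussian_moments4 M W s \<longleftrightarrow>
     (\<forall>k\<le>4. integrable M (\<lambda>w. W w ^ k) \<and> (\<integral>w. W w ^ k \<partial>M) = gaussian_moment k s)"

lemma gaussian_moments4D:
  assumes "gaussian_moments4 M W s" and "k \<le> 4"
  shows "integrable M (\<lambda>w. W w ^ k)" and "(\<integral>w. W w ^ k \<partial>M) = gaussian_moment k s"
  using assms unfolding gaussian_moments4_def by auto

lemma gaussian_moment_convolution:
  assumes "k \<le> 4"
  shows "(\<Sum>j\<le>k. real (k choose j) * gaussian_moment j s * gaussian_moment (k - j) t)
       = gaussian_moment k (s + t)"
proof -
  have "k \<in> {0, 1, 2, 3, 4}" using assms by auto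
  moreover have "(3::nat) choose 1 = 3" "(3::nat) choose 2 = 3" "(4::nat) choose 1 = 4"
    "(4::nat) choose 2 = 6" "(4::nat) choose 3 = 4"
    by (simp_all add: numeral_eq_Suc)
  ultimately show ?thesis
    by (auto simp: atMost_nat_numeral power2_eq_square algebra_simps)
qed

lemma (in prob_space) indep_var_powers:
  fixes a b :: "'a \<Rightarrow> real"
  assumes ind: "indep_var borel a borel b"
    and ia: "integrable M (\<lambda>w. a w ^ p)" and ib: "integrable M (\<lambda>w. b w ^ q)"
  shows "integrable M (\<lambda>w. a w ^ p * b w ^ q)"
    and "(\<integral>w. a w ^ p * b w ^ q \<partial>M) = (\<integral>w. a w ^ p \<partial>M) * (\<integral>w. b w ^ q \<partial>M)"
proof -
  have "indep_var borel (\<lambda>w. a w ^ p) borel (\<lambda>w. b w ^ q)"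
    using indep_var_compose[OF ind, of "\<lambda>x. x ^ p" borel "\<lambda>x. x ^ q" borel] by (simp add: comp_def)
  then show "integrable M (\<lambda>w. a w ^ p * b w ^ q)"
    and "(\<integral>w. a w ^ p * b w ^ q \<partial>M) = (\<integral>w. a w ^ p \<partial>M) * (\<integral>w. b w ^ q \<partial>M)"
    using indep_var_integrable indep_var_lebesgue_integral ia ib by blast+
qed

lemma (in prob_space) gaussian_moments4_add:
  assumes a: "gaussian_moments4 M a s" and b: "gaussian_moments4 M b t"
    and ind: "indep_var borel a borel b"
  shows "gaussian_moments4 M (\<lambda>w. a w + b w) (s + t)"
  unfolding gaussian_moments4_def
proof (intro allI impI conjI)
  fix k :: nat assume k: "k \<le> 4"
  have ab: "integrable M (\<lambda>w. a w ^ j * b w ^ (k - j))"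
    "(\<integral>w. a w ^ j * b w ^ (k - j) \<partial>M) = gaussian_moment j s * gaussian_moment (k - j) t"
    if "j \<le> k" for j
    using indep_var_powers[OF ind] gaussian_moments4D[OF a] gaussian_moments4D[OF b] that k by simp_all
  have binomial: "(\<lambda>w. (a w + b w) ^ k) = (\<lambda>w. \<Sum>j\<le>k. real (k choose j) * (a w ^ j * b w ^ (k - j)))"
    by (simp add: binomial_ring mult.assoc)
  show "integrable M (\<lambda>w. (a w + b w) ^ k)"
    unfolding binomial by (intro Bochner_Integration.integrable_sum integrable_mult_right ab) simp
  show "(\<integral>w. (a w + b w) ^ k \<partial>M) = gaussian_moment k (s + t)"
    unfolding binomial using ab
    by (simp add: Bochner_Integration.integral_sum gaussian_moment_convolution[OF k, symmetric] mult.assoc)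
qed

definition gaussian_moments4_vec :: "'a measure \<Rightarrow> ('a \<Rightarrow> real^'n) \<Rightarrow> real^'n^'n \<Rightarrow> bool" where
  "gaussian_moments4_vec M U K \<longleftrightarrow>
     U \<in> borel_measurable M \<and> (\<forall>u. gaussian_moments4 M (\<lambda>w. u \<bullet> U w) (u \<bullet> (K *v u)))"

lemma gaussian_moments4_vecD:
  assumes "gaussian_moments4_vec M U K" and "k \<le> 4"
  shows "U \<in> borel_measurable M"
    and "integrable M (\<lambda>w. (u \<bullet> U w) ^ k)" and "(\<integral>w. (u \<bullet> U w) ^ k \<partial>M) = gaussian_moment k (u \<bullet> (K *v u))"
  using assms gaussian_moments4D[of M "\<lambda>w. u \<bullet> U w" "u \<bullet> (K *v u)" k]
  unfolding gaussian_moments4_vec_def by auto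

lemma gaussian_moments4_vec_mvn:
  fixes X :: "'w \<Rightarrow> real^'d" and S :: "real^'d^'d"
  assumes "prob_space M" and "sym_pos_def_mat S"
    and D: "distributed M lborel X (\<lambda>x. ennreal (mvn_density mu S x))"
  shows "gaussian_moments4_vec M (\<lambda>w. X w - mu) S"
proof -
  interpret prob_space M by fact
  have [measurable]: "X \<in> borel_measurable M" using D by (auto simp: distributed_def)
  have "gaussian_moments4 M (\<lambda>w. u \<bullet> (X w - mu)) (u \<bullet> (S *v u))" for u
    unfolding gaussian_moments4_def
    using gaussian_moments_of_mgf[OF _ mvn_mgf[OF assms]] by simp
  then show ?thesis unfolding gaussian_moments4_vec_def by simp
qed

lemma gaussian_moments4_vec_linear:
  assumes "gaussian_moments4_vec M U K"
  shows "gaussian_moments4_vec M (\<lambda>w. A *v U w) (A ** K ** transpose A)"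
proof -
  have [measurable]: "U \<in> borel_measurable M" using assms by (simp add: gaussian_moments4_vec_def)
  have "gaussian_moments4 M (\<lambda>w. u \<bullet> (A *v U w)) (u \<bullet> ((A ** K ** transpose A) *v u))" for u
  proof -
    have "u \<bullet> ((A ** K ** transpose A) *v u) = (transpose A *v u) \<bullet> (K *v (transpose A *v u))"
      by (simp only: matrix_vector_mul_assoc[symmetric] inner_transpose_matrix)
    then show ?thesis
      using assms unfolding gaussian_moments4_vec_def inner_transpose_matrix[of u A] by simp
  qed
  then show ?thesis unfolding gaussian_moments4_vec_def by simp
qed

lemma (in prob_space) gaussian_moments4_vec_add:
  assumes U: "gaussian_moments4_vec M U K" and V: "gaussian_moments4_vec M V K'"
    and ind: "indep_var borel U borel V"
  shows "gaussian_moments4_vec M (\<lambda>w. U w + V w) (K + K')"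
proof -
  have [measurable]: "U \<in> borel_measurable M" "V \<in> borel_measurable M"
    using U V by (auto simp: gaussian_moments4_vec_def)
  have "gaussian_moments4 M (\<lambda>w. u \<bullet> U w + u \<bullet> V w) (u \<bullet> (K *v u) + u \<bullet> (K' *v u))" for u
  proof (rule gaussian_moments4_add)
    show "indep_var borel (\<lambda>w. u \<bullet> U w) borel (\<lambda>w. u \<bullet> V w)"
      using indep_var_compose[OF ind, of "\<lambda>x. u \<bullet> x" borel "\<lambda>x. u \<bullet> x" borel] by (simp add: comp_def)
  qed (use U V in \<open>auto simp: gaussian_moments4_vec_def\<close>)
  then show ?thesis
    unfolding gaussian_moments4_vec_def
    by (simp add: inner_add_right matrix_vector_mult_add_rdistrib)
qed

lemma (in prob_space) gaussian_moments4_vec_sum: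
  fixes U :: "'i \<Rightarrow> 'a \<Rightarrow> real^'n"
  assumes "finite I" and "indep_vars (\<lambda>_. borel) U I"
    and "\<And>i. i \<in> I \<Longrightarrow> gaussian_moments4_vec M (U i) (K i)"
  shows "gaussian_moments4_vec M (\<lambda>w. \<Sum>i\<in>I. U i w) (\<Sum>i\<in>I. K i)"
  using assms
proof (induction I rule: finite_induct)
  case empty
  have "gaussian_moment k 0 = 0 ^ k" if "k \<le> 4" for k
  proof -
    have "k \<in> {0, 1, 2, 3, 4}" using that by auto
    then show ?thesis by auto
  qed
  then show ?case by (simp add: gaussian_moments4_vec_def gaussian_moments4_def prob_space)
next
  case (insert x F)
  have indF: "indep_vars (\<lambda>_. borel) U F"
    using insert.prems(1) by (rule indep_vars_subset) auto
  have r: "indep_var (PiM {x} (\<lambda>_. borel)) (\<lambda>\<omega>. restrict (\<lambda>i. U i \<omega>) {x})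
                     (PiM F (\<lambda>_. borel)) (\<lambda>\<omega>. restrict (\<lambda>i. U i \<omega>) F)"
    using insert.hyps by (intro indep_var_restrict[OF insert.prems(1)]) auto
  have "(\<lambda>f. f x) \<in> measurable (PiM {x} (\<lambda>_. borel)) (borel :: (real^'n) measure)"
    and "(\<lambda>f. \<Sum>i\<in>F. f i) \<in> measurable (PiM F (\<lambda>_. borel)) (borel :: (real^'n) measure)"
    by (auto intro!: borel_measurable_sum measurable_component_singleton)
  from indep_var_compose[OF r this]
  have "indep_var borel (U x) borel (\<lambda>\<omega>. \<Sum>i\<in>F. U i \<omega>)"
    by (simp add: comp_def cong: sum.cong)
  from gaussian_moments4_vec_add[OF _ insert.IH[OF indF] this] insert.prems(2) insert.hyps
  show ?case by simp
qed

lemma inner_sym_matrix_commute: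
  fixes K :: "real^'n^'n"
  assumes "transpose K = K"
  shows "v \<bullet> (K *v u) = u \<bullet> (K *v v)"
  by (metis assms inner_commute inner_sym_matrix_swap)

lemma gaussian_moments4_vec_nonneg:
  assumes "gaussian_moments4_vec M U K"
  shows "0 \<le> u \<bullet> (K *v u)"
proof -
  have "0 \<le> (\<integral>w. (u \<bullet> U w) ^ 2 \<partial>M)" by (rule integral_nonneg_AE) simp
  then show ?thesis using gaussian_moments4_vecD(3)[OF assms, of 2] by simp
qed

lemma gaussian_moments4_vec_mixed2:
  assumes U: "gaussian_moments4_vec M U K" and K: "transpose K = K"
  shows "integrable M (\<lambda>w. (u \<bullet> U w) * (v \<bullet> U w))"
    and "(\<integral>w. (u \<bullet> U w) * (v \<bullet> U w) \<partial>M) = u \<bullet> (K *v v)"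
proof -
  have e: "(u \<bullet> U w) * (v \<bullet> U w) = (((u + v) \<bullet> U w)^2 - (u \<bullet> U w)^2 - (v \<bullet> U w)^2) / 2" for w
    by (simp add: inner_add_left power2_eq_square algebra_simps)
  note D = gaussian_moments4_vecD[OF U, of 2]
  show "integrable M (\<lambda>w. (u \<bullet> U w) * (v \<bullet> U w))"
    unfolding e by (intro integrable_divide Bochner_Integration.integrable_diff D) simp_all
  have "(u + v) \<bullet> (K *v (u + v)) = u \<bullet> (K *v u) + 2 * (u \<bullet> (K *v v)) + v \<bullet> (K *v v)"
    using inner_sym_matrix_commute[OF K, of v u]
    by (simp add: matrix_vector_right_distrib inner_add_left inner_add_right)
  then show "(\<integral>w. (u \<bullet> U w) * (v \<bullet> U w) \<partial>M) = u \<bullet> (K *v v)"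
    unfolding e by (simp add: Bochner_Integration.integral_diff D)
qed

lemma gaussian_moments4_vec_mixed4:
  assumes U: "gaussian_moments4_vec M U K" and K: "transpose K = K"
  shows "integrable M (\<lambda>w. (u \<bullet> U w)^2 * (v \<bullet> U w)^2)"
    and "(\<integral>w. (u \<bullet> U w)^2 * (v \<bullet> U w)^2 \<partial>M)
         = (u \<bullet> (K *v u)) * (v \<bullet> (K *v v)) + 2 * (u \<bullet> (K *v v))^2"
proof -
  have e: "(u \<bullet> U w)^2 * (v \<bullet> U w)^2
      = (((u + v) \<bullet> U w)^4 + ((u - v) \<bullet> U w)^4 - 2 * (u \<bullet> U w)^4 - 2 * (v \<bullet> U w)^4) / 12" for w
    by (simp add: inner_add_left inner_diff_left power4_eq_xxxx power2_eq_square algebra_simps)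
  note D = gaussian_moments4_vecD[OF U, of 4]
  show "integrable M (\<lambda>w. (u \<bullet> U w)^2 * (v \<bullet> U w)^2)" unfolding e
    by (intro integrable_divide Bochner_Integration.integrable_diff Bochner_Integration.integrable_add
        integrable_mult_right D) simp_all
  have s: "v \<bullet> (K *v u) = u \<bullet> (K *v v)" by (rule inner_sym_matrix_commute[OF K])
  have "(u + v) \<bullet> (K *v (u + v)) = u \<bullet> (K *v u) + 2 * (u \<bullet> (K *v v)) + v \<bullet> (K *v v)"
    and "(u - v) \<bullet> (K *v (u - v)) = u \<bullet> (K *v u) - 2 * (u \<bullet> (K *v v)) + v \<bullet> (K *v v)"
    using s by (simp_all add: matrix_vector_right_distrib matrix_vector_mult_diff_distrib
        inner_add_left inner_add_right inner_diff_left inner_diff_right)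
  then show "(\<integral>w. (u \<bullet> U w)^2 * (v \<bullet> U w)^2 \<partial>M)
         = (u \<bullet> (K *v u)) * (v \<bullet> (K *v v)) + 2 * (u \<bullet> (K *v v))^2"
    unfolding e
    by (simp add: Bochner_Integration.integral_diff Bochner_Integration.integral_add D)
      (simp add: power2_eq_square algebra_simps)
qed

lemma nonneg_quadratic_discriminant:
  fixes a b c :: real
  assumes "\<And>t. 0 \<le> t^2 * a + 2 * t * c + b" and "0 \<le> a"
  shows "c^2 \<le> a * b"
proof (cases "a = 0")
  case True
  show ?thesis
  proof (rule ccontr)
    assume "\<not> c^2 \<le> a * b"
    then have c: "c \<noteq> 0" using True by auto
    have "0 \<le> (-(b+1)/(2*c))^2 * a + 2 * (-(b+1)/(2*c)) * c + b" by (rule assms(1))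
    then show False using True c by (simp add: field_simps)
  qed
next
  case False
  then have a: "a > 0" using assms by simp
  have "0 \<le> (-c/a)^2 * a + 2 * (-c/a) * c + b" by (rule assms(1))
  then have "0 \<le> (b * a - c^2) / a" using a by (simp add: field_simps power2_eq_square)
  then show ?thesis using a by (simp add: field_simps zero_le_divide_iff)
qed

lemma gaussian_moments4_vec_cauchy_schwarz:
  assumes U: "gaussian_moments4_vec M U K" and K: "transpose K = K"
  shows "(u \<bullet> (K *v v))^2 \<le> (u \<bullet> (K *v u)) * (v \<bullet> (K *v v))"
proof (rule nonneg_quadratic_discriminant)
  fix t :: real
  have "0 \<le> (t *\<^sub>R u + v) \<bullet> (K *v (t *\<^sub>R u + v))" by (rule gaussian_moments4_vec_nonneg[OF U])
  also have "\<dots> = t^2 * (u \<bullet> (K *v u)) + 2 * t * (u \<bullet> (K *v v)) + v \<bullet> (K *v v)"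
    using inner_sym_matrix_commute[OF K, of v u]
    by (simp add: matrix_vector_right_distrib inner_add_left inner_add_right
        matrix_vector_mult_scaleR power2_eq_square algebra_simps)
  finally show "0 \<le> t^2 * (u \<bullet> (K *v u)) + 2 * t * (u \<bullet> (K *v v)) + v \<bullet> (K *v v)" .
qed (rule gaussian_moments4_vec_nonneg[OF U])

definition gaussian_moments4_law :: "(real^'n) measure \<Rightarrow> real^'n^'n \<Rightarrow> bool" where
  "gaussian_moments4_law \<mu> K \<longleftrightarrow>
     prob_space \<mu> \<and> sets \<mu> = sets borel \<and> transpose K = K \<and> gaussian_moments4_vec \<mu> (\<lambda>x. x) K"

lemma (in prob_space) gaussian_moments4_law_distr:
  assumes U: "gaussian_moments4_vec M U K" and "transpose K = K"
  shows "gaussian_moments4_law (distr M borel U) K"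
proof -
  have [measurable]: "U \<in> borel_measurable M" using U by (simp add: gaussian_moments4_vec_def)
  have "gaussian_moments4 (distr M borel U) (\<lambda>x. u \<bullet> x) s"
    if "gaussian_moments4 M (\<lambda>w. u \<bullet> U w) s" for u s
    using that unfolding gaussian_moments4_def by (simp add: integrable_distr_eq integral_distr)
  then show ?thesis
    using U assms(2) prob_space_distr[of U borel]
    unfolding gaussian_moments4_law_def gaussian_moments4_vec_def by simp
qed

context
  fixes \<mu> :: "(real^'n) measure" and K :: "real^'n^'n"
  assumes law: "gaussian_moments4_law \<mu> K"
begin

lemma gaussian_moments4_law_basic:
  shows "prob_space \<mu>" and "sets \<mu> = sets borel" and "transpose K = K"
    and "gaussian_moments4_vec \<mu> (\<lambda>x. x) K"
  using law unfolding gaussian_moments4_law_def by auto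

lemma quadratic_form_law_nonneg: "0 \<le> u \<bullet> (K *v u)"
  by (rule gaussian_moments4_vec_nonneg[OF gaussian_moments4_law_basic(4)])

lemma nn_integral_inner_sq_law:
  "(\<integral>\<^sup>+x. ennreal ((u \<bullet> x)^2) \<partial>\<mu>) = ennreal (u \<bullet> (K *v u))"
proof -
  have "integrable \<mu> (\<lambda>x. (u \<bullet> x)^2)" and "(\<integral>x. (u \<bullet> x)^2 \<partial>\<mu>) = u \<bullet> (K *v u)"
    using gaussian_moments4_vecD[OF gaussian_moments4_law_basic(4), of 2] by simp_all
  then show ?thesis by (simp add: nn_integral_eq_integral)
qed

lemma nn_integral_inner_sq_sq_law_le:
  "(\<integral>\<^sup>+x. ennreal ((u \<bullet> x)^2) * ennreal ((v \<bullet> x)^2) \<partial>\<mu>)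
     \<le> ennreal (3 * (u \<bullet> (K *v u)) * (v \<bullet> (K *v v)))"
proof -
  note U = gaussian_moments4_law_basic(4,3)
  have "(\<integral>\<^sup>+x. ennreal ((u \<bullet> x)^2) * ennreal ((v \<bullet> x)^2) \<partial>\<mu>)
      = ennreal (\<integral>x. (u \<bullet> x)^2 * (v \<bullet> x)^2 \<partial>\<mu>)"
    using nn_integral_eq_integral[OF gaussian_moments4_vec_mixed4(1)[OF U]]
    by (simp add: ennreal_mult'')
  also have "\<dots> \<le> ennreal (3 * (u \<bullet> (K *v u)) * (v \<bullet> (K *v v)))"
    unfolding gaussian_moments4_vec_mixed4(2)[OF U]
    using gaussian_moments4_vec_cauchy_schwarz[OF U, of u v] by (intro ennreal_leI) simp
  finally show ?thesis .
qed

lemma integral_inner_mult_law: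
  "(\<integral>x. (u \<bullet> x) * (v \<bullet> x) \<partial>\<mu>) = u \<bullet> (K *v v)"
  using gaussian_moments4_vec_mixed2(2)[OF gaussian_moments4_law_basic(4,3)] by simp

lemma integral_quadratic_form_law:
  fixes P :: "real^'n^'n"
  shows "integrable \<mu> (\<lambda>x. x \<bullet> (P *v x))" and "(\<integral>x. x \<bullet> (P *v x) \<partial>\<mu>) = trace (P ** K)"
proof -
  note U = gaussian_moments4_law_basic(4,3)
  have ax: "axis i 1 \<bullet> x = x $ i" for i and x :: "real^'n" by (simp add: inner_axis')
  have e: "x \<bullet> (P *v x) = (\<Sum>i\<in>UNIV. \<Sum>j\<in>UNIV. P $ i $ j * ((axis i 1 \<bullet> x) * (axis j 1 \<bullet> x)))" for x
    unfolding ax by (simp add: inner_vec_def matrix_vector_mult_def sum_distrib_left algebra_simps)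
  show "integrable \<mu> (\<lambda>x. x \<bullet> (P *v x))" unfolding e
    by (intro Bochner_Integration.integrable_sum integrable_mult_right gaussian_moments4_vec_mixed2(1)[OF U])
  have k: "axis i 1 \<bullet> (K *v axis j 1) = K $ i $ j" for i j
    unfolding ax by (simp add: matrix_vector_mult_def axis_def if_distrib cong: if_cong)
  have "(\<integral>x. x \<bullet> (P *v x) \<partial>\<mu>) = (\<Sum>i\<in>UNIV. \<Sum>j\<in>UNIV. P $ i $ j * K $ i $ j)" unfolding e
    by (simp add: Bochner_Integration.integral_sum gaussian_moments4_vec_mixed2[OF U] k
        Bochner_Integration.integrable_sum integrable_mult_right)
  also have "\<dots> = trace (P ** K)"
  proof -
    have "K $ i $ j = K $ j $ i" for i j
      using gaussian_moments4_law_basic(3) by (metis transpose_def vec_lambda_beta)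
    then show ?thesis by (simp add: trace_def matrix_matrix_mult_def)
  qed
  finally show "(\<integral>x. x \<bullet> (P *v x) \<partial>\<mu>) = trace (P ** K)" .
qed

lemma nn_integral_sandwich_law:
  assumes T: "transpose T = T"
  shows "(\<integral>\<^sup>+x. ennreal ((T *v x) \<bullet> (K *v (T *v x))) \<partial>\<mu>) = ennreal (trace (T ** K ** T ** K))"
    and "0 \<le> trace (T ** K ** T ** K)"
proof -
  have e: "(T *v x) \<bullet> (K *v (T *v x)) = x \<bullet> ((T ** K ** T) *v x)" for x
    using inner_sym_matrix_swap[OF T, of x "K *v (T *v x)"]
    by (simp add: matrix_vector_mul_assoc matrix_mul_assoc)
  have nonneg: "AE x in \<mu>. 0 \<le> x \<bullet> ((T ** K ** T) *v x)"
    using quadratic_form_law_nonneg[of "T *v _"] e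
    by (auto simp del: matrix_vector_mul_assoc)
  show "(\<integral>\<^sup>+x. ennreal ((T *v x) \<bullet> (K *v (T *v x))) \<partial>\<mu>) = ennreal (trace (T ** K ** T ** K))"
    unfolding e nn_integral_eq_integral[OF integral_quadratic_form_law(1) nonneg]
    by (simp add: integral_quadratic_form_law(2) matrix_mul_assoc)
  have "0 \<le> (\<integral>x. x \<bullet> ((T ** K ** T) *v x) \<partial>\<mu>)" by (rule integral_nonneg_AE[OF nonneg])
  then show "0 \<le> trace (T ** K ** T ** K)" by (simp add: integral_quadratic_form_law(2) matrix_mul_assoc)
qed

end

lemma integrable_sq_of_nn_integral_le:
  fixes f :: "'a \<Rightarrow> real"
  assumes [measurable]: "f \<in> borel_measurable M"
    and le: "(\<integral>\<^sup>+x. ennreal ((f x)^2) \<partial>M) \<le> ennreal B" and "0 \<le> B"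
  shows "integrable M (\<lambda>x. (f x)^2)" and "(\<integral>x. (f x)^2 \<partial>M) \<le> B"
proof -
  show int: "integrable M (\<lambda>x. (f x)^2)"
    by (rule integrableI_nonneg) (use le in \<open>auto simp: top.extremum_unique less_top[symmetric]
        intro: le_less_trans\<close>)
  have "ennreal (\<integral>x. (f x)^2 \<partial>M) \<le> ennreal B"
    using le nn_integral_eq_integral[OF int] by simp
  then show "(\<integral>x. (f x)^2 \<partial>M) \<le> B"
    using \<open>0 \<le> B\<close> by simp
qed

section \<open>The cyclic form \<open>\<Lambda>\<^sub>1\<Lambda>\<^sub>2\<Lambda>\<^sub>3\<close> under independent Gaussian-moment laws\<close>

definition cyclic_form :: "real^'n^'n \<Rightarrow> real^'n \<Rightarrow> real^'n \<Rightarrow> real^'n \<Rightarrow> real" where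
  "cyclic_form T a b c = (a \<bullet> (T *v b)) * (b \<bullet> (T *v c)) * (c \<bullet> (T *v a))"

context
  fixes \<mu> :: "(real^'n) measure" and K T :: "real^'n^'n"
  assumes law: "gaussian_moments4_law \<mu> K" and T: "transpose T = T"
  notes [measurable_cong] = gaussian_moments4_law_basic(2)[OF law]
begin

interpretation pair_prob_space \<mu> \<mu>
  by (simp add: pair_prob_space_def pair_sigma_finite_def prob_space_imp_sigma_finite
      gaussian_moments4_law_basic(1)[OF law])

lemma nn_integral_cyclic_form_sq_fst_le:
  "(\<integral>\<^sup>+a. ennreal ((cyclic_form T a b c)^2) \<partial>\<mu>)
     \<le> ennreal (3 * ((T *v c) \<bullet> (K *v (T *v c))))
       * (ennreal ((c \<bullet> (T *v b))^2) * ennreal ((T *v b) \<bullet> (K *v (T *v b))))"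
proof -
  let ?q = "\<lambda>x. (T *v x) \<bullet> (K *v (T *v x))"
  have swap: "x \<bullet> (T *v z) = (T *v x) \<bullet> z" for x z by (rule inner_sym_matrix_swap[OF T])
  have "(\<integral>\<^sup>+a. ennreal ((cyclic_form T a b c)^2) \<partial>\<mu>)
      = (\<integral>\<^sup>+a. ennreal ((c \<bullet> (T *v b))^2) * (ennreal (((T *v b) \<bullet> a)^2) * ennreal (((T *v c) \<bullet> a)^2)) \<partial>\<mu>)"
  proof (rule nn_integral_cong)
    fix a
    have "b \<bullet> (T *v c) = c \<bullet> (T *v b)" by (metis swap inner_commute)
    then have "(cyclic_form T a b c)^2 = (c \<bullet> (T *v b))^2 * (((T *v b) \<bullet> a)^2 * ((T *v c) \<bullet> a)^2)"
      by (simp add: cyclic_form_def swap[of c a] inner_commute[of a] power_mult_distrib mult_ac)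
    then show "ennreal ((cyclic_form T a b c)^2)
        = ennreal ((c \<bullet> (T *v b))^2) * (ennreal (((T *v b) \<bullet> a)^2) * ennreal (((T *v c) \<bullet> a)^2))"
      by (simp add: ennreal_mult'')
  qed
  also have "\<dots> = ennreal ((c \<bullet> (T *v b))^2) *
      (\<integral>\<^sup>+a. ennreal (((T *v b) \<bullet> a)^2) * ennreal (((T *v c) \<bullet> a)^2) \<partial>\<mu>)"
    by (rule nn_integral_cmult) measurable
  also have "\<dots> \<le> ennreal ((c \<bullet> (T *v b))^2) * ennreal (3 * ?q b * ?q c)"
    by (intro mult_left_mono nn_integral_inner_sq_sq_law_le[OF law]) simp
  also have "\<dots> = ennreal (3 * ?q c) * (ennreal ((c \<bullet> (T *v b))^2) * ennreal (?q b))"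
    using quadratic_form_law_nonneg[OF law, of "T *v b"] quadratic_form_law_nonneg[OF law, of "T *v c"]
    by (simp add: ennreal_mult'' mult_ac)
  finally show ?thesis .
qed

text \<open>Both bounds write the weight \<open>(T b)\<^sup>T K (T b)\<close> as a second moment over a fresh copy of
  \<open>\<mu>\<close>, exchange the two integrations, and use the fourth mixed moment bound.\<close>

lemma nn_integral_weighted_sandwich_le:
  "(\<integral>\<^sup>+b. ennreal ((y \<bullet> (T *v b))^2) * ennreal ((T *v b) \<bullet> (K *v (T *v b))) \<partial>\<mu>)
     \<le> ennreal (3 * ((T *v y) \<bullet> (K *v (T *v y))) * trace (T ** K ** T ** K))"
proof -
  let ?q = "\<lambda>x. (T *v x) \<bullet> (K *v (T *v x))"
  have swap: "x \<bullet> (T *v z) = (T *v x) \<bullet> z" for x z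
    by (rule inner_sym_matrix_swap[OF T])
  have q: "ennreal (?q b) = (\<integral>\<^sup>+a. ennreal ((a \<bullet> (T *v b))^2) \<partial>\<mu>)" for b
    using nn_integral_inner_sq_law[OF law, of "T *v b"] by (simp add: inner_commute[of _ "T *v b"])
  have "(\<integral>\<^sup>+b. ennreal ((y \<bullet> (T *v b))^2) * ennreal (?q b) \<partial>\<mu>)
      = (\<integral>\<^sup>+b. \<integral>\<^sup>+a. ennreal ((y \<bullet> (T *v b))^2) * ennreal ((a \<bullet> (T *v b))^2) \<partial>\<mu> \<partial>\<mu>)"
    unfolding q by (intro nn_integral_cong nn_integral_cmult[symmetric]) measurable
  also have "\<dots> = (\<integral>\<^sup>+a. \<integral>\<^sup>+b. ennreal ((y \<bullet> (T *v b))^2) * ennreal ((a \<bullet> (T *v b))^2) \<partial>\<mu> \<partial>\<mu>)"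
    by (rule Fubini') measurable
  also have "\<dots> \<le> (\<integral>\<^sup>+a. ennreal (3 * ?q y) * ennreal (?q a) \<partial>\<mu>)"
  proof (rule nn_integral_mono)
    fix a
    have "0 \<le> ?q a" by (rule quadratic_form_law_nonneg[OF law])
    then show "(\<integral>\<^sup>+b. ennreal ((y \<bullet> (T *v b))^2) * ennreal ((a \<bullet> (T *v b))^2) \<partial>\<mu>)
        \<le> ennreal (3 * ?q y) * ennreal (?q a)"
      using nn_integral_inner_sq_sq_law_le[OF law, of "T *v y" "T *v a"]
      by (simp add: swap ennreal_mult'')
  qed
  also have "\<dots> = ennreal (3 * ?q y) * ennreal (trace (T ** K ** T ** K))"
    by (simp add: nn_integral_cmult nn_integral_sandwich_law[OF law T])
  also have "\<dots> = ennreal (3 * ?q y * trace (T ** K ** T ** K))"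
    using nn_integral_sandwich_law(2)[OF law T] by (rule ennreal_mult''[symmetric])
  finally show ?thesis .
qed

lemma nn_integral_sandwich_sq_le:
  "(\<integral>\<^sup>+c. ennreal ((T *v c) \<bullet> (K *v (T *v c))) * ennreal ((T *v c) \<bullet> (K *v (T *v c))) \<partial>\<mu>)
     \<le> ennreal (3 * (trace (T ** K ** T ** K))^2)"
proof -
  let ?q = "\<lambda>x. (T *v x) \<bullet> (K *v (T *v x))" and ?J = "trace (T ** K ** T ** K)"
  have q: "ennreal (?q c) = (\<integral>\<^sup>+a. ennreal ((a \<bullet> (T *v c))^2) \<partial>\<mu>)" for c
    using nn_integral_inner_sq_law[OF law, of "T *v c"] by (simp add: inner_commute[of _ "T *v c"])
  have "(\<integral>\<^sup>+c. ennreal (?q c) * ennreal (?q c) \<partial>\<mu>)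
      = (\<integral>\<^sup>+c. \<integral>\<^sup>+a. ennreal ((a \<bullet> (T *v c))^2) * ennreal (?q c) \<partial>\<mu> \<partial>\<mu>)"
    by (subst (1) q) (intro nn_integral_cong nn_integral_multc[symmetric], measurable)
  also have "\<dots> = (\<integral>\<^sup>+a. \<integral>\<^sup>+c. ennreal ((a \<bullet> (T *v c))^2) * ennreal (?q c) \<partial>\<mu> \<partial>\<mu>)"
    by (rule Fubini') measurable
  also have "\<dots> \<le> (\<integral>\<^sup>+a. ennreal (3 * ?J) * ennreal (?q a) \<partial>\<mu>)"
  proof (rule nn_integral_mono)
    fix a
    have "0 \<le> ?q a" by (rule quadratic_form_law_nonneg[OF law])
    then have "ennreal (3 * ?q a * ?J) = ennreal (3 * ?J) * ennreal (?q a)"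
      using ennreal_mult''[of "?q a" "3 * ?J"] by (simp add: mult_ac)
    then show "(\<integral>\<^sup>+c. ennreal ((a \<bullet> (T *v c))^2) * ennreal (?q c) \<partial>\<mu>) \<le> ennreal (3 * ?J) * ennreal (?q a)"
      using nn_integral_weighted_sandwich_le[of a] by (simp add: mult.commute)
  qed
  also have "\<dots> = ennreal (3 * ?J) * ennreal ?J"
    by (simp add: nn_integral_cmult nn_integral_sandwich_law[OF law T])
  also have "\<dots> = ennreal (3 * ?J^2)"
    using ennreal_mult''[OF nn_integral_sandwich_law(2)[OF law T], of "3 * ?J"]
    by (simp add: power2_eq_square mult.assoc)
  finally show ?thesis .
qed

end

context
  fixes \<mu>A \<mu>B \<mu>C :: "(real^'n) measure" and K T :: "real^'n^'n"
  assumes A: "gaussian_moments4_law \<mu>A K" and B: "gaussian_moments4_law \<mu>B K"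
    and C: "gaussian_moments4_law \<mu>C K" and T: "transpose T = T"
  notes [measurable_cong] = gaussian_moments4_law_basic(2)[OF A] gaussian_moments4_law_basic(2)[OF B]
    gaussian_moments4_law_basic(2)[OF C]
begin

interpretation A: prob_space \<mu>A using gaussian_moments4_law_basic(1)[OF A] .
interpretation B: prob_space \<mu>B using gaussian_moments4_law_basic(1)[OF B] .
interpretation C: prob_space \<mu>C using gaussian_moments4_law_basic(1)[OF C] .
interpretation BC: pair_prob_space \<mu>B \<mu>C by unfold_locales
interpretation ABC: pair_prob_space \<mu>A "\<mu>B \<Otimes>\<^sub>M \<mu>C" by unfold_locales

lemma nn_integral_cyclic_form_sq_le:
  "(\<integral>\<^sup>+(a, b, c). ennreal ((cyclic_form T a b c)^2) \<partial>(\<mu>A \<Otimes>\<^sub>M (\<mu>B \<Otimes>\<^sub>M \<mu>C)))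
     \<le> ennreal (27 * (trace (T ** K ** T ** K))^3)"
proof -
  let ?q = "\<lambda>x. (T *v x) \<bullet> (K *v (T *v x))" and ?J = "trace (T ** K ** T ** K)"
  have q0: "0 \<le> ?q x" for x by (rule quadratic_form_law_nonneg[OF A])
  have J0: "0 \<le> ?J" by (rule nn_integral_sandwich_law(2)[OF A T])
  have "(\<integral>\<^sup>+(a, b, c). ennreal ((cyclic_form T a b c)^2) \<partial>(\<mu>A \<Otimes>\<^sub>M (\<mu>B \<Otimes>\<^sub>M \<mu>C)))
      = (\<integral>\<^sup>+(b, c). \<integral>\<^sup>+a. ennreal ((cyclic_form T a b c)^2) \<partial>\<mu>A \<partial>(\<mu>B \<Otimes>\<^sub>M \<mu>C))"
    by (subst ABC.nn_integral_snd[symmetric]) (auto simp: cyclic_form_def split_beta')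
  also have "\<dots> \<le> (\<integral>\<^sup>+(b, c). ennreal (3 * ?q c) * (ennreal ((c \<bullet> (T *v b))^2) * ennreal (?q b))
      \<partial>(\<mu>B \<Otimes>\<^sub>M \<mu>C))"
    by (intro nn_integral_mono) (auto intro: nn_integral_cyclic_form_sq_fst_le[OF A T])
  also have "\<dots> = (\<integral>\<^sup>+c. ennreal (3 * ?q c) *
      (\<integral>\<^sup>+b. ennreal ((c \<bullet> (T *v b))^2) * ennreal (?q b) \<partial>\<mu>B) \<partial>\<mu>C)"
    by (subst BC.nn_integral_snd[symmetric]) (measurable, auto intro!: nn_integral_cong nn_integral_cmult)
  also have "\<dots> \<le> (\<integral>\<^sup>+c. ennreal (9 * ?J) * (ennreal (?q c) * ennreal (?q c)) \<partial>\<mu>C)"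
  proof (rule nn_integral_mono)
    fix c
    have "ennreal (3 * ?q c) * (\<integral>\<^sup>+b. ennreal ((c \<bullet> (T *v b))^2) * ennreal (?q b) \<partial>\<mu>B)
        \<le> ennreal (3 * ?q c) * ennreal (3 * ?q c * ?J)"
      by (intro mult_left_mono nn_integral_weighted_sandwich_le[OF B T]) simp
    also have "\<dots> = ennreal (9 * ?J) * (ennreal (?q c) * ennreal (?q c))"
      using q0[of c] J0 by (simp add: ennreal_mult[symmetric] mult_ac)
    finally show "ennreal (3 * ?q c) * (\<integral>\<^sup>+b. ennreal ((c \<bullet> (T *v b))^2) * ennreal (?q b) \<partial>\<mu>B)
        \<le> ennreal (9 * ?J) * (ennreal (?q c) * ennreal (?q c))" .
  qed
  also have "\<dots> = ennreal (9 * ?J) * (\<integral>\<^sup>+c. ennreal (?q c) * ennreal (?q c) \<partial>\<mu>C)"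
    by (rule nn_integral_cmult) measurable
  also have "\<dots> \<le> ennreal (9 * ?J) * ennreal (3 * ?J^2)"
    by (intro mult_left_mono nn_integral_sandwich_sq_le[OF C T]) simp
  also have "\<dots> = ennreal (27 * ?J^3)"
    using J0 by (simp add: power3_eq_cube power2_eq_square mult_ac flip: ennreal_mult)
  finally show ?thesis .
qed

lemma integrable_cyclic_form:
  "integrable (\<mu>A \<Otimes>\<^sub>M (\<mu>B \<Otimes>\<^sub>M \<mu>C)) (\<lambda>(a, b, c). cyclic_form T a b c)"
proof -
  have meas: "(\<lambda>(a, b, c). cyclic_form T a b c) \<in> borel_measurable (\<mu>A \<Otimes>\<^sub>M (\<mu>B \<Otimes>\<^sub>M \<mu>C))"
    unfolding cyclic_form_def by measurable
  have "integrable (\<mu>A \<Otimes>\<^sub>M (\<mu>B \<Otimes>\<^sub>M \<mu>C)) (\<lambda>z. ((\<lambda>(a, b, c). cyclic_form T a b c) z)^2)"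
    by (rule integrable_sq_of_nn_integral_le(1)[OF meas, where B = "27 * (trace (T ** K ** T ** K))^3"])
      (use nn_integral_cyclic_form_sq_le nn_integral_sandwich_law(2)[OF A T] in \<open>auto simp: split_beta'\<close>)
  then show ?thesis by (rule ABC.square_integrable_imp_integrable[OF meas])
qed

lemma integral_cyclic_form:
  "(\<integral>(a, b, c). cyclic_form T a b c \<partial>(\<mu>A \<Otimes>\<^sub>M (\<mu>B \<Otimes>\<^sub>M \<mu>C))) = trace (T ** K ** T ** K ** T ** K)"
proof -
  have swap: "x \<bullet> (T *v z) = (T *v x) \<bullet> z" for x z by (rule inner_sym_matrix_swap[OF T])
  define g where "g b c = (c \<bullet> (T *v b)) * ((T *v b) \<bullet> (K *v (T *v c)))" for b c
  have inner_a: "(\<integral>a. cyclic_form T a b c \<partial>\<mu>A) = g b c" for b c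
  proof -
    have "b \<bullet> (T *v c) = c \<bullet> (T *v b)" by (metis swap inner_commute)
    then have "cyclic_form T a b c = (c \<bullet> (T *v b)) * (((T *v b) \<bullet> a) * ((T *v c) \<bullet> a))" for a
      by (simp add: cyclic_form_def swap[of c a] inner_commute[of a] mult_ac)
    then show ?thesis by (simp add: g_def integral_inner_mult_law[OF A])
  qed
  have inner_b: "(\<integral>b. g b c \<partial>\<mu>B) = c \<bullet> ((T ** K ** T ** K ** T) *v c)" for c
  proof -
    have "(T *v b) \<bullet> y = (T *v y) \<bullet> b" for b y by (metis swap inner_commute)
    then have "g b c = ((T *v c) \<bullet> b) * ((T *v (K *v (T *v c))) \<bullet> b)" for b
      by (simp add: g_def swap)
    then have "(\<integral>b. g b c \<partial>\<mu>B) = (T *v c) \<bullet> (K *v (T *v (K *v (T *v c))))"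
      by (simp add: integral_inner_mult_law[OF B])
    also have "\<dots> = c \<bullet> (T *v (K *v (T *v (K *v (T *v c)))))"
      by (simp only: swap)
    also have "\<dots> = c \<bullet> ((T ** K ** T ** K ** T) *v c)"
      by (simp add: matrix_vector_mul_assoc matrix_mul_assoc)
    finally show ?thesis .
  qed
  have int: "integrable (\<mu>A \<Otimes>\<^sub>M (\<mu>B \<Otimes>\<^sub>M \<mu>C)) (\<lambda>(a, y). cyclic_form T a (fst y) (snd y))"
    using integrable_cyclic_form by (simp add: split_beta')
  have int_g: "integrable (\<mu>B \<Otimes>\<^sub>M \<mu>C) (\<lambda>(b, c). g b c)"
    using ABC.integrable_snd[OF int] by (simp add: inner_a split_beta')
  have "(\<integral>(a, b, c). cyclic_form T a b c \<partial>(\<mu>A \<Otimes>\<^sub>M (\<mu>B \<Otimes>\<^sub>M \<mu>C))) = (\<integral>(b, c). g b c \<partial>(\<mu>B \<Otimes>\<^sub>M \<mu>C))"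
    using ABC.integral_snd[OF int] by (simp add: inner_a split_beta')
  also have "\<dots> = (\<integral>c. c \<bullet> ((T ** K ** T ** K ** T) *v c) \<partial>\<mu>C)"
    using BC.integral_snd[OF int_g] by (simp add: inner_b)
  also have "\<dots> = trace (T ** K ** T ** K ** T ** K)"
    by (simp add: integral_quadratic_form_law(2)[OF C])
  finally show ?thesis .
qed

end

section \<open>Variance of a sum with many independent pairs\<close>

lemma integrable_mult_of_integrable_sq:
  fixes f g :: "'a \<Rightarrow> real"
  assumes [measurable]: "f \<in> borel_measurable M" "g \<in> borel_measurable M"
    and "integrable M (\<lambda>x. (f x)^2)" and "integrable M (\<lambda>x. (g x)^2)"
  shows "integrable M (\<lambda>x. f x * g x)"
proof (rule Bochner_Integration.integrable_bound)
  show "integrable M (\<lambda>x. (f x)^2 + (g x)^2)" using assms(3,4) by simp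
  have "\<bar>a * b\<bar> \<le> a^2 + b^2" for a b :: real
  proof -
    have "2 * (\<bar>a\<bar> * \<bar>b\<bar>) \<le> a^2 + b^2"
      using sum_squares_bound[of "\<bar>a\<bar>" "\<bar>b\<bar>"] by (simp add: mult.assoc)
    moreover have "0 \<le> \<bar>a\<bar> * \<bar>b\<bar>" by simp
    ultimately show ?thesis unfolding abs_mult by linarith
  qed
  then show "AE x in M. norm (f x * g x) \<le> norm ((f x)^2 + (g x)^2)" by simp
qed simp

lemma (in prob_space) expectation_mult_le_sq:
  fixes f g :: "'a \<Rightarrow> real"
  assumes "integrable M (\<lambda>x. f x * g x)"
    and "integrable M (\<lambda>x. (f x)^2)" and "integrable M (\<lambda>x. (g x)^2)"
  shows "expectation (\<lambda>x. f x * g x) \<le> (expectation (\<lambda>x. (f x)^2) + expectation (\<lambda>x. (g x)^2)) / 2"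
proof -
  have "f x * g x \<le> ((f x)^2 + (g x)^2) / 2" for x
    using sum_squares_bound[of "f x" "g x"] by (simp add: power2_eq_square)
  then have "expectation (\<lambda>x. f x * g x) \<le> expectation (\<lambda>x. ((f x)^2 + (g x)^2) / 2)"
    using assms by (intro integral_mono) auto
  then show ?thesis using assms(2,3) by simp
qed

lemma (in prob_space) integral_centred_sq:
  fixes f :: "'a \<Rightarrow> real"
  assumes "integrable M f" and "integrable M (\<lambda>x. (f x)^2)" and "expectation f = m"
  shows "integrable M (\<lambda>x. (f x - m)^2)"
    and "expectation (\<lambda>x. (f x - m)^2) = expectation (\<lambda>x. (f x)^2) - m^2"
proof -
  have sq: "(\<lambda>x. (f x - m)^2) = (\<lambda>x. (f x)^2 - 2 * m * f x + m^2)"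
    by (simp add: power2_eq_square algebra_simps)
  show "integrable M (\<lambda>x. (f x - m)^2)" unfolding sq using assms(1,2) by simp
  show "expectation (\<lambda>x. (f x - m)^2) = expectation (\<lambda>x. (f x)^2) - m^2"
    unfolding sq using assms by (simp add: prob_space power2_eq_square)
qed

lemma (in prob_space) indep_var_centred_mult_expectation:
  fixes f g :: "'a \<Rightarrow> real"
  assumes ind: "indep_var borel f borel g" and "integrable M f" and "integrable M g"
    and "expectation f = m" and "expectation g = m'"
  shows "expectation (\<lambda>x. (f x - m) * (g x - m')) = 0"
proof -
  have "indep_var borel (\<lambda>x. f x - m) borel (\<lambda>x. g x - m')"
    using indep_var_compose[OF ind, of "\<lambda>x. x - m" borel "\<lambda>x. x - m'" borel] by (simp add: comp_def)
  then have "expectation (\<lambda>x. (f x - m) * (g x - m'))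
      = expectation (\<lambda>x. f x - m) * expectation (\<lambda>x. g x - m')"
    using assms(2,3) by (intro indep_var_lebesgue_integral) auto
  then show ?thesis using assms(2-5) by (simp add: prob_space)
qed

text \<open>Pairs in \<open>D\<close> are uncorrelated; every other pair contributes at most \<open>B\<close> by the arithmetic-geometric
  mean inequality.\<close>

lemma (in prob_space) variance_sum_le:
  fixes h :: "'l \<Rightarrow> 'a \<Rightarrow> real"
  assumes "finite L"
    and hi: "\<And>l. l \<in> L \<Longrightarrow> integrable M (h l)"
    and hi2: "\<And>l. l \<in> L \<Longrightarrow> integrable M (\<lambda>w. (h l w)^2)"
    and mean: "\<And>l. l \<in> L \<Longrightarrow> expectation (h l) = m"
    and bound: "\<And>l. l \<in> L \<Longrightarrow> expectation (\<lambda>w. (h l w)^2) \<le> B"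
    and DL: "D \<subseteq> L \<times> L"
    and ind: "\<And>l l'. (l, l') \<in> D \<Longrightarrow> indep_var borel (h l) borel (h l')"
  shows "expectation (\<lambda>w. ((\<Sum>l\<in>L. h l w) - real (card L) * m)^2) \<le> real (card (L \<times> L - D)) * B"
proof -
  define g where "g l w = h l w - m" for l w
  have gm [measurable]: "g l \<in> borel_measurable M" if "l \<in> L" for l
    using hi[OF that] unfolding g_def by auto
  have gi2: "integrable M (\<lambda>w. (g l w)^2)" and gv: "expectation (\<lambda>w. (g l w)^2) \<le> B" if "l \<in> L" for l
  proof -
    note centred = integral_centred_sq[OF hi[OF that] hi2[OF that] mean[OF that]]
    show "integrable M (\<lambda>w. (g l w)^2)" using centred(1) unfolding g_def .
    show "expectation (\<lambda>w. (g l w)^2) \<le> B"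
      using centred(2) bound[OF that] zero_le_power2[of m] unfolding g_def by linarith
  qed
  have gi12: "integrable M (\<lambda>w. g l w * g l' w)" if "l \<in> L" "l' \<in> L" for l l'
    using that by (intro integrable_mult_of_integrable_sq gm gi2)
  define F where "F p = expectation (\<lambda>w. g (fst p) w * g (snd p) w)" for p
  have expand: "((\<Sum>l\<in>L. h l w) - real (card L) * m)^2 = (\<Sum>p\<in>L \<times> L. g (fst p) w * g (snd p) w)" for w
  proof -
    have "(\<Sum>l\<in>L. h l w) - real (card L) * m = (\<Sum>l\<in>L. g l w)"
      unfolding g_def by (simp add: sum_subtractf)
    then show ?thesis by (simp add: power2_eq_square sum_product sum.cartesian_product split_def)
  qed
  have "expectation (\<lambda>w. ((\<Sum>l\<in>L. h l w) - real (card L) * m)^2) = (\<Sum>p\<in>L \<times> L. F p)"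
    unfolding F_def expand using gi12 by (simp add: Bochner_Integration.integral_sum mem_Times_iff)
  also have "\<dots> = (\<Sum>p\<in>L \<times> L - D. F p) + (\<Sum>p\<in>D. F p)"
    by (rule sum.subset_diff[OF DL]) (simp add: \<open>finite L\<close>)
  also have "(\<Sum>p\<in>D. F p) = 0"
  proof (intro sum.neutral ballI)
    fix p assume "p \<in> D"
    with DL have "fst p \<in> L" "snd p \<in> L" and "indep_var borel (h (fst p)) borel (h (snd p))"
      by (auto intro: ind)
    then show "F p = 0"
      unfolding F_def g_def using hi mean by (intro indep_var_centred_mult_expectation) auto
  qed
  also have "(\<Sum>p\<in>L \<times> L - D. F p) + 0 \<le> (\<Sum>p\<in>L \<times> L - D. B)"
  proof -
    have "F p \<le> B" if "p \<in> L \<times> L - D" for p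
    proof -
      have ll: "fst p \<in> L" "snd p \<in> L" using that by auto
      have "F p \<le> (expectation (\<lambda>w. (g (fst p) w)^2) + expectation (\<lambda>w. (g (snd p) w)^2)) / 2"
        unfolding F_def by (intro expectation_mult_le_sq gi12 gi2 ll)
      also have "\<dots> \<le> B" using gv[OF ll(1)] gv[OF ll(2)] by simp
      finally show ?thesis .
    qed
    then show ?thesis using sum_mono[of "L \<times> L - D" F "\<lambda>_. B"] by simp
  qed
  finally show ?thesis by simp
qed

section \<open>Counting tuples of distinct indices\<close>

definition inj_tuples :: "nat \<Rightarrow> 'a set \<Rightarrow> (nat \<Rightarrow> 'a) set" where
  "inj_tuples k S = {f \<in> {..<k} \<rightarrow>\<^sub>E S. inj_on f {..<k}}"

lemma bij_betw_inj_tuples_lists: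
  "bij_betw (\<lambda>f. map f [0..<k]) (inj_tuples k S) {xs. length xs = k \<and> distinct xs \<and> set xs \<subseteq> S}"
proof (rule bij_betw_byWitness[where f'="\<lambda>xs i. if i < k then xs ! i else undefined"])
  show "\<forall>f\<in>inj_tuples k S. (\<lambda>i. if i < k then map f [0..<k] ! i else undefined) = f"
    by (auto simp: inj_tuples_def fun_eq_iff PiE_def extensional_def)
  show "\<forall>xs\<in>{xs. length xs = k \<and> distinct xs \<and> set xs \<subseteq> S}.
      map (\<lambda>i. if i < k then xs ! i else undefined) [0..<k] = xs"
    by (auto simp: list_eq_iff_nth_eq)
  show "(\<lambda>f. map f [0..<k]) ` inj_tuples k S \<subseteq> {xs. length xs = k \<and> distinct xs \<and> set xs \<subseteq> S}"
    by (auto simp: inj_tuples_def distinct_map lessThan_atLeast0)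
  show "(\<lambda>xs i. if i < k then xs ! i else undefined) ` {xs. length xs = k \<and> distinct xs \<and> set xs \<subseteq> S}
      \<subseteq> inj_tuples k S"
    by (auto simp: inj_tuples_def PiE_iff extensional_def inj_on_def nth_eq_iff_index_eq)
qed

lemma prod_top_interval_eq_fact_binomial:
  assumes "k \<le> m"
  shows "\<Prod>{m - k + 1..m} = fact k * (m choose k)"
proof -
  have "fact (m - k) * \<Prod>{m - k + 1..m} = fact (m - k) * (fact k * (m choose k))"
    using fact_eq_fact_times[of "m - k" m] binomial_fact_lemma[OF assms] by (simp add: mult_ac)
  then show ?thesis by simp
qed

lemma card_inj_tuples:
  assumes "finite S"
  shows "card (inj_tuples k S) = fact k * (card S choose k)"
proof (cases "k \<le> card S")
  case True
  have "card (inj_tuples k S) = card {xs. length xs = k \<and> distinct xs \<and> set xs \<subseteq> S}"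
    by (rule bij_betw_same_card[OF bij_betw_inj_tuples_lists])
  also have "\<dots> = fact k * (card S choose k)"
    using card_lists_distinct_length_eq[OF assms True] prod_top_interval_eq_fact_binomial[OF True] by simp
  finally show ?thesis .
next
  case False
  have "inj_tuples k S = {}"
  proof (rule ccontr)
    assume "inj_tuples k S \<noteq> {}"
    then obtain f where "f \<in> {..<k} \<rightarrow> S" "inj_on f {..<k}" by (auto simp: inj_tuples_def PiE_iff)
    then show False using card_inj[OF _ _ assms] False by fastforce
  qed
  then show ?thesis using False by simp
qed

lemma finite_inj_tuples: "finite S \<Longrightarrow> finite (inj_tuples k S)"
  unfolding inj_tuples_def by (rule finite_subset[OF _ finite_PiE[of "{..<k}" "\<lambda>_. S"]]) auto

lemma card_disjoint_inj_tuple_pairs: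
  assumes "finite S"
  shows "card (SIGMA f:inj_tuples k S. inj_tuples k (S - f ` {..<k}))
       = (fact k * (card S choose k)) * (fact k * ((card S - k) choose k))"
proof -
  have "card (inj_tuples k (S - f ` {..<k})) = fact k * ((card S - k) choose k)"
    if "f \<in> inj_tuples k S" for f
  proof -
    have "f ` {..<k} \<subseteq> S" and "inj_on f {..<k}" using that by (auto simp: inj_tuples_def)
    then have "card (S - f ` {..<k}) = card S - k" by (simp add: card_Diff_subset card_image)
    then show ?thesis by (simp add: card_inj_tuples assms)
  qed
  then have "card (SIGMA f:inj_tuples k S. inj_tuples k (S - f ` {..<k}))
      = (\<Sum>f\<in>inj_tuples k S. fact k * ((card S - k) choose k))"
    by (simp add: card_SigmaI finite_inj_tuples assms)
  then show ?thesis by (simp add: card_inj_tuples assms)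
qed

lemma inj_tuples_Diff: "g \<in> inj_tuples k (S - A) \<longleftrightarrow> g \<in> inj_tuples k S \<and> A \<inter> g ` {..<k} = {}"
  by (auto simp: inj_tuples_def PiE_iff)

lemma six_tuples_eq: "six_tuples n = (\<Pi>\<^sub>E i\<in>UNIV. inj_tuples 6 {..<n i})"
  unfolding six_tuples_def inj_tuples_def ..

lemma finite_six_tuples: "finite (six_tuples n)"
  by (simp add: six_tuples_eq finite_PiE finite_inj_tuples)

lemma card_six_tuples: "card (six_tuples n) = (\<Prod>i\<in>UNIV. fact 6 * (n i choose 6))"
  by (simp add: six_tuples_eq card_PiE card_inj_tuples)

definition disjoint_tuple_pairs :: "('g::finite \<Rightarrow> nat) \<Rightarrow> (('g \<Rightarrow> nat \<Rightarrow> nat) \<times> ('g \<Rightarrow> nat \<Rightarrow> nat)) set" where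
  "disjoint_tuple_pairs n = {(l, l') \<in> six_tuples n \<times> six_tuples n. \<forall>i. l i ` {..<6} \<inter> l' i ` {..<6} = {}}"

lemma card_disjoint_tuple_pairs:
  "card (disjoint_tuple_pairs n) = (\<Prod>i\<in>UNIV. (fact 6 * (n i choose 6)) * (fact 6 * ((n i - 6) choose 6)))"
proof -
  let ?P = "\<lambda>i. SIGMA f:inj_tuples 6 {..<n i}. inj_tuples 6 ({..<n i} - f ` {..<6})"
  have mem: "p \<in> ?P i \<longleftrightarrow> fst p \<in> inj_tuples 6 {..<n i} \<and> snd p \<in> inj_tuples 6 {..<n i}
      \<and> fst p ` {..<6} \<inter> snd p ` {..<6} = {}" for p i
    by (cases p) (simp add: inj_tuples_Diff conj_commute)
  have D: "p \<in> disjoint_tuple_pairs n \<longleftrightarrow> (\<forall>i. (fst p i, snd p i) \<in> ?P i)" for p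
    by (cases p) (simp add: disjoint_tuple_pairs_def six_tuples_eq mem PiE_iff all_conj_distrib)
  have "bij_betw (\<lambda>p i. (fst p i, snd p i)) (disjoint_tuple_pairs n) (\<Pi>\<^sub>E i\<in>UNIV. ?P i)"
    by (rule bij_betw_byWitness[where f'="\<lambda>q. (\<lambda>i. fst (q i), \<lambda>i. snd (q i))"])
      (auto simp: D PiE_iff)
  then have "card (disjoint_tuple_pairs n) = (\<Prod>i\<in>UNIV. card (?P i))"
    by (simp add: bij_betw_same_card card_PiE)
  then show ?thesis by (simp add: card_disjoint_inj_tuple_pairs)
qed

section \<open>The vectors \<open>Z\<close> of independent normal samples\<close>

lemma transpose_kron: "transpose (kron A B) = kron (transpose A) (transpose B)"
  by (simp add: vec_eq_iff kron_def transpose_def)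

lemma transpose_VN: "transpose (VN n S) = VN n (\<lambda>i. transpose (S i))"
  by (auto simp: vec_eq_iff VN_def transpose_def)

definition Zvec :: "('g::finite \<Rightarrow> nat) \<Rightarrow> ('g \<Rightarrow> nat \<Rightarrow> 'w \<Rightarrow> real^'d::finite)
     \<Rightarrow> ('g \<Rightarrow> nat \<Rightarrow> nat) \<Rightarrow> nat \<Rightarrow> nat \<Rightarrow> 'w \<Rightarrow> real^('g \<times> 'd)" where
  "Zvec n X l p q w = (\<chi> k. Zblk n X l p q (fst k) w $ snd k)"

lemma sum_UNIV_prod:
  "(\<Sum>k\<in>(UNIV::('a::finite \<times> 'b::finite) set). f k) = (\<Sum>i\<in>UNIV. \<Sum>j\<in>UNIV. f (i, j))"
  by (subst UNIV_Times_UNIV[symmetric]) (simp only: sum.cartesian_product case_prod_eta)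

lemma Lam_eq_inner_Zvec:
  "Lam n X TW TS l p q r s w = Zvec n X l p q w \<bullet> (kron TW TS *v Zvec n X l r s w)"
proof -
  let ?Z = "\<lambda>i. Zblk n X l p q i w" and ?Z' = "\<lambda>j. Zblk n X l r s j w"
  have "Zvec n X l p q w \<bullet> (kron TW TS *v Zvec n X l r s w)
      = (\<Sum>i\<in>UNIV. \<Sum>a\<in>UNIV. \<Sum>j\<in>UNIV. \<Sum>b\<in>UNIV. TW $ i $ j * (?Z i $ a * (TS $ a $ b * ?Z' j $ b)))"
    by (simp add: inner_vec_def matrix_vector_mult_def Zvec_def kron_def sum_UNIV_prod
        sum_distrib_left mult_ac)
  also have "\<dots> = (\<Sum>i\<in>UNIV. \<Sum>j\<in>UNIV. \<Sum>a\<in>UNIV. \<Sum>b\<in>UNIV. TW $ i $ j * (?Z i $ a * (TS $ a $ b * ?Z' j $ b)))"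
    by (rule sum.cong[OF refl], rule sum.swap)
  also have "\<dots> = Lam n X TW TS l p q r s w"
    by (simp add: Lam_def inner_vec_def matrix_vector_mult_def sum_distrib_left)
  finally show ?thesis ..
qed

definition block_embedding :: "'g::finite \<Rightarrow> real^'d::finite^('g \<times> 'd)" where
  "block_embedding i = (\<chi> k b. if fst k = i \<and> snd k = b then 1 else 0)"

lemma block_embedding_mult_vector:
  "(block_embedding i *v v) $ k = (if fst k = i then v $ snd k else 0)"
  by (auto simp: block_embedding_def matrix_vector_mult_def if_distrib if_distribR cong: if_cong)

lemma block_embedding_sandwich:
  "(block_embedding i ** S ** transpose (block_embedding i)) $ k $ k'
     = (if fst k = i \<and> fst k' = i then S $ snd k $ snd k' else 0)"
proof -
  have "(block_embedding i ** S) $ k $ b = (if fst k = i then S $ snd k $ b else 0)" for b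
    by (auto simp: block_embedding_def matrix_matrix_mult_def if_distrib if_distribR cong: if_cong)
  then show ?thesis
    by (cases "fst k = i")
      (auto simp: matrix_matrix_mult_def transpose_def block_embedding_def if_distrib if_distribR cong: if_cong)
qed

text \<open>\<open>Z\<^sup>(\<^sup>p\<^sup>q\<^sup>)\<close> is a sum of terms \<open>Zcoeff ob (X\<^sub>o\<^sub>b - mu\<^sub>i)\<close>, one for each of its
  observations \<open>ob \<in> pair_obs l p q\<close>; these are independent, and the means cancel.\<close>

definition pair_obs :: "('g::finite \<Rightarrow> nat \<Rightarrow> nat) \<Rightarrow> nat \<Rightarrow> nat \<Rightarrow> ('g \<times> nat) set" where
  "pair_obs l p q = (\<lambda>(i, t). (i, l i t)) ` (UNIV \<times> {p, q})"

definition Zcoeff :: "('g::finite \<Rightarrow> nat) \<Rightarrow> ('g \<Rightarrow> nat \<Rightarrow> nat) \<Rightarrow> nat \<Rightarrow> 'g \<times> nat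
     \<Rightarrow> real^'d::finite^('g \<times> 'd)" where
  "Zcoeff n l p ob = ((if snd ob = l (fst ob) p then 1 else -1)
     * sqrt (real (\<Sum>k\<in>UNIV. n k) / real (n (fst ob)))) *\<^sub>R block_embedding (fst ob)"

definition Zvec_of_obs :: "('g::finite \<Rightarrow> nat) \<Rightarrow> ('g \<Rightarrow> real^'d::finite) \<Rightarrow> ('g \<Rightarrow> nat \<Rightarrow> nat)
     \<Rightarrow> nat \<Rightarrow> nat \<Rightarrow> ('g \<times> nat \<Rightarrow> real^'d) \<Rightarrow> real^('g \<times> 'd)" where
  "Zvec_of_obs n mu l p q x = (\<Sum>ob\<in>pair_obs l p q. Zcoeff n l p ob *v (x ob - mu (fst ob)))"

lemma sum_pair_obs:
  assumes "\<And>i. l i p \<noteq> l i q"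
  shows "(\<Sum>ob\<in>pair_obs l p q. f ob) = (\<Sum>i\<in>UNIV. f (i, l i p) + f (i, l i q))"
proof -
  have pq: "p \<noteq> q" using assms by metis
  have "inj_on (\<lambda>(i, t). (i, l i t)) (UNIV \<times> {p, q})"
    using assms by (auto simp: inj_on_def) metis
  then have "(\<Sum>ob\<in>pair_obs l p q. f ob) = (\<Sum>i\<in>UNIV. \<Sum>t\<in>{p, q}. f (i, l i t))"
    unfolding pair_obs_def by (simp add: sum.reindex sum.cartesian_product split_def)
  then show ?thesis using pq by simp
qed

lemma pair_obs_subset:
  assumes "\<And>i. l i p < n i" and "\<And>i. l i q < n i"
  shows "pair_obs l p q \<subseteq> {(i, j). j < n i}"
  using assms unfolding pair_obs_def by auto

lemma pair_obs_disjoint: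
  assumes "\<And>i. inj_on (l i) {..<6}" and "{p, q, r, s} \<subseteq> {..<6}" and "{p, q} \<inter> {r, s} = {}"
  shows "pair_obs l p q \<inter> pair_obs l r s = {}"
  using assms unfolding pair_obs_def inj_on_def by auto

lemma Zvec_eq_Zvec_of_obs:
  assumes "\<And>i. l i p \<noteq> l i q" and "pair_obs l p q \<subseteq> S"
  shows "Zvec n X l p q w = Zvec_of_obs n mu l p q (restrict (\<lambda>ob. X (fst ob) (snd ob) w) S)"
proof -
  have lq: "l i q \<noteq> l i p" for i using assms(1)[of i] by metis
  have mem: "(i, l i p) \<in> S" "(i, l i q) \<in> S" for i
    using assms(2) unfolding pair_obs_def by auto
  show ?thesis
    unfolding Zvec_of_obs_def Zcoeff_def scaleR_matrix_vector_assoc[symmetric]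
    by (simp add: vec_eq_iff sum_pair_obs[where l=l and p=p and q=q, OF assms(1)] sum_component mem lq
        block_embedding_mult_vector if_distrib Zvec_def Zblk_def algebra_simps cong: if_cong)
qed

lemma borel_measurable_Zvec_of_obs:
  assumes "pair_obs l p q \<subseteq> S"
  shows "Zvec_of_obs n mu l p q \<in> borel_measurable (PiM S (\<lambda>_. borel))"
  unfolding Zvec_of_obs_def
proof (rule borel_measurable_sum)
  fix ob assume "ob \<in> pair_obs l p q"
  then have [measurable]: "(\<lambda>x. x ob) \<in> measurable (PiM S (\<lambda>_. borel)) (borel :: (real^'d) measure)"
    using assms by (intro measurable_component_singleton) auto
  show "(\<lambda>x. Zcoeff n l p ob *v (x ob - mu (fst ob))) \<in> borel_measurable (PiM S (\<lambda>_. borel))"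
    by measurable
qed

lemma scaleR_sandwich:
  fixes A :: "real^'a^'b" and S :: "real^'a^'a"
  shows "(c *\<^sub>R A) ** S ** transpose (c *\<^sub>R A) = (c * c) *\<^sub>R (A ** S ** transpose A)"
  by (simp add: vec_eq_iff matrix_matrix_mult_def transpose_def sum_distrib_left mult_ac)

lemma sum_Zcoeff_sandwich:
  fixes Sigma :: "'g::finite \<Rightarrow> real^'d::finite^'d"
  assumes "\<And>i. l i p \<noteq> l i q" and "\<And>i. 0 < n i"
  shows "(\<Sum>ob\<in>pair_obs l p q. Zcoeff n l p ob ** Sigma (fst ob) ** transpose (Zcoeff n l p ob))
       = 2 *\<^sub>R VN n Sigma"
proof -
  have "Zcoeff n l p ob ** Sigma (fst ob) ** transpose (Zcoeff n l p ob)
      = (real (\<Sum>k\<in>UNIV. n k) / real (n (fst ob))) *\<^sub>R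
        (block_embedding (fst ob) ** Sigma (fst ob) ** transpose (block_embedding (fst ob)))" for ob
    unfolding Zcoeff_def scaleR_sandwich by (simp add: abs_of_nonneg sum_nonneg)
  then have "(\<Sum>ob\<in>pair_obs l p q. Zcoeff n l p ob ** Sigma (fst ob) ** transpose (Zcoeff n l p ob))
      = (\<Sum>i\<in>UNIV. (2 * (real (\<Sum>k\<in>UNIV. n k) / real (n i))) *\<^sub>R
          (block_embedding i ** Sigma i ** transpose (block_embedding i)))"
    by (simp add: sum_pair_obs[where l=l and p=p and q=q, OF assms(1)] scaleR_2 flip: scaleR_add_left)
  also have "\<dots> = 2 *\<^sub>R VN n Sigma"
    by (auto simp: vec_eq_iff sum_component block_embedding_sandwich VN_def if_distrib
        intro: sum.neutral cong: if_cong)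
  finally show ?thesis .
qed

definition C5_term :: "('g::finite \<Rightarrow> nat) \<Rightarrow> ('g \<Rightarrow> nat \<Rightarrow> 'w \<Rightarrow> real^'d::finite) \<Rightarrow> real^'g^'g
     \<Rightarrow> real^'d^'d \<Rightarrow> ('g \<Rightarrow> nat \<Rightarrow> nat) \<Rightarrow> 'w \<Rightarrow> real" where
  "C5_term n X TW TS l w =
     Lam n X TW TS l 0 1 2 3 w * Lam n X TW TS l 2 3 4 5 w * Lam n X TW TS l 4 5 0 1 w"

lemma C5_term_eq_cyclic_form:
  "C5_term n X TW TS l w
     = cyclic_form (kron TW TS) (Zvec n X l 0 1 w) (Zvec n X l 2 3 w) (Zvec n X l 4 5 w)"
  by (simp add: C5_term_def cyclic_form_def Lam_eq_inner_Zvec)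

lemma six_tuplesD:
  assumes "l \<in> six_tuples n"
  shows "inj_on (l i) {..<6}" and "k < 6 \<Longrightarrow> l i k < n i"
    and "a < 6 \<Longrightarrow> b < 6 \<Longrightarrow> a \<noteq> b \<Longrightarrow> l i a \<noteq> l i b"
  using assms unfolding six_tuples_def by (auto simp: PiE_iff inj_on_def)

definition tuple_obs :: "('g \<Rightarrow> nat \<Rightarrow> nat) \<Rightarrow> ('g \<times> nat) set" where
  "tuple_obs l = {(i, j). j \<in> l i ` {..<6}}"

lemma pair_obs_subset_tuple_obs: "p < 6 \<Longrightarrow> q < 6 \<Longrightarrow> pair_obs l p q \<subseteq> tuple_obs l"
  unfolding pair_obs_def tuple_obs_def by auto

lemma tuple_obs_subset: "l \<in> six_tuples n \<Longrightarrow> tuple_obs l \<subseteq> {(i, j). j < n i}"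
  using six_tuplesD(2) unfolding tuple_obs_def by fastforce

lemma (in prob_space) distr_pair_indep_var_compose:
  assumes ind: "indep_var N1 Y1 N2 Y2" and f: "f \<in> measurable N1 S" and g: "g \<in> measurable N2 T"
  shows "distr M (S \<Otimes>\<^sub>M T) (\<lambda>w. (f (Y1 w), g (Y2 w))) = distr M S (\<lambda>w. f (Y1 w)) \<Otimes>\<^sub>M distr M T (\<lambda>w. g (Y2 w))"
proof -
  have rv1: "random_variable N1 Y1" and rv2: "random_variable N2 Y2"
    and d: "distr M N1 Y1 \<Otimes>\<^sub>M distr M N2 Y2 = distr M (N1 \<Otimes>\<^sub>M N2) (\<lambda>x. (Y1 x, Y2 x))"
    using ind unfolding indep_var_distribution_eq by blast+
  have e1: "distr M S (\<lambda>w. f (Y1 w)) = distr (distr M N1 Y1) S f"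
    using distr_distr[OF f rv1] by (simp add: comp_def)
  have e2: "distr M T (\<lambda>w. g (Y2 w)) = distr (distr M N2 Y2) T g"
    using distr_distr[OF g rv2] by (simp add: comp_def)
  have sf: "sigma_finite_measure (distr (distr M N2 Y2) T g)"
  proof -
    have "prob_space (distr (distr M N2 Y2) T g)"
      by (intro prob_space.prob_space_distr prob_space_distr rv2) (simp add: g)
    then show ?thesis by (simp add: prob_space_imp_sigma_finite)
  qed
  have "distr M S (\<lambda>w. f (Y1 w)) \<Otimes>\<^sub>M distr M T (\<lambda>w. g (Y2 w))
      = distr (distr M N1 Y1 \<Otimes>\<^sub>M distr M N2 Y2) (S \<Otimes>\<^sub>M T) (\<lambda>(x, y). (f x, g y))"
    unfolding e1 e2 by (rule pair_measure_distr) (auto simp: f g sf)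
  also have "\<dots> = distr (distr M (N1 \<Otimes>\<^sub>M N2) (\<lambda>x. (Y1 x, Y2 x))) (S \<Otimes>\<^sub>M T) (\<lambda>(x, y). (f x, g y))"
    unfolding d ..
  also have "\<dots> = distr M (S \<Otimes>\<^sub>M T) (\<lambda>w. (f (Y1 w), g (Y2 w)))"
  proof -
    have m: "(\<lambda>z. (f (fst z), g (snd z))) \<in> measurable (N1 \<Otimes>\<^sub>M N2) (S \<Otimes>\<^sub>M T)"
      by (intro measurable_Pair measurable_compose[OF measurable_fst f] measurable_compose[OF measurable_snd g])
    have m': "(\<lambda>(x, y). (f x, g y)) \<in> measurable (N1 \<Otimes>\<^sub>M N2) (S \<Otimes>\<^sub>M T)"
      using m by (simp add: case_prod_beta')
    have rv: "(\<lambda>x. (Y1 x, Y2 x)) \<in> measurable M (N1 \<Otimes>\<^sub>M N2)" by (intro measurable_Pair rv1 rv2)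
    show ?thesis by (subst distr_distr[OF m' rv]) (simp add: comp_def)
  qed
  finally show ?thesis ..
qed

locale gaussian_samples = prob_space M
  for M :: "'w measure" +
  fixes n :: "'g::finite \<Rightarrow> nat" and X :: "'g \<Rightarrow> nat \<Rightarrow> 'w \<Rightarrow> real^'d::finite"
    and mu :: "'g \<Rightarrow> real^'d" and Sigma :: "'g \<Rightarrow> real^'d^'d"
  assumes Sigma_spd: "\<And>i. sym_pos_def_mat (Sigma i)"
    and X_mvn: "\<And>i j. j < n i \<Longrightarrow> distributed M lborel (X i j) (\<lambda>x. ennreal (mvn_density (mu i) (Sigma i) x))"
    and X_indep: "indep_vars (\<lambda>_. borel) (\<lambda>(i, j). X i j) {(i, j). j < n i}"
begin

lemma transpose_VN_Sigma: "transpose (VN n Sigma) = VN n Sigma"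
  using Sigma_spd by (simp add: transpose_VN sym_pos_def_mat_def)

lemma indep_var_disjoint_obs:
  assumes "A \<inter> B = {}" and "A \<subseteq> {(i, j). j < n i}" and "B \<subseteq> {(i, j). j < n i}"
    and "f \<in> measurable (PiM A (\<lambda>_. borel)) N" and "g \<in> measurable (PiM B (\<lambda>_. borel)) N'"
  shows "indep_var N (\<lambda>w. f (restrict (\<lambda>ob. X (fst ob) (snd ob) w) A))
           N' (\<lambda>w. g (restrict (\<lambda>ob. X (fst ob) (snd ob) w) B))"
  using indep_var_compose[OF indep_var_restrict[OF X_indep assms(1-3)] assms(4,5)]
  by (simp add: comp_def case_prod_beta)

lemma distr_pair_disjoint_obs:
  assumes "A \<inter> B = {}" and "A \<subseteq> {(i, j). j < n i}" and "B \<subseteq> {(i, j). j < n i}"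
    and "f \<in> measurable (PiM A (\<lambda>_. borel)) N" and "g \<in> measurable (PiM B (\<lambda>_. borel)) N'"
  shows "distr M (N \<Otimes>\<^sub>M N') (\<lambda>w. (f (restrict (\<lambda>ob. X (fst ob) (snd ob) w) A),
                                      g (restrict (\<lambda>ob. X (fst ob) (snd ob) w) B)))
       = distr M N (\<lambda>w. f (restrict (\<lambda>ob. X (fst ob) (snd ob) w) A))
         \<Otimes>\<^sub>M distr M N' (\<lambda>w. g (restrict (\<lambda>ob. X (fst ob) (snd ob) w) B))"
  using distr_pair_indep_var_compose[OF indep_var_restrict[OF X_indep assms(1-3)] assms(4,5)]
  by (simp add: case_prod_beta)

lemma gaussian_moments4_vec_Zvec:
  assumes l: "\<And>i. l i p \<noteq> l i q" "\<And>i. l i p < n i" "\<And>i. l i q < n i"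
  shows "gaussian_moments4_vec M (Zvec n X l p q) (2 *\<^sub>R VN n Sigma)"
proof -
  let ?Y = "\<lambda>ob w. Zcoeff n l p ob *v (X (fst ob) (snd ob) w - mu (fst ob))"
  have sub: "pair_obs l p q \<subseteq> {(i, j). j < n i}" using l(2,3) by (rule pair_obs_subset)
  have "indep_vars (\<lambda>_. borel) (\<lambda>ob w. Zcoeff n l p ob *v ((\<lambda>(i, j). X i j) ob w - mu (fst ob)))
      (pair_obs l p q)"
    by (rule indep_vars_compose2[OF indep_vars_subset[OF X_indep sub]]) measurable
  then have ind: "indep_vars (\<lambda>_. borel) ?Y (pair_obs l p q)"
    by (simp add: case_prod_beta)
  have g: "gaussian_moments4_vec M (?Y ob) (Zcoeff n l p ob ** Sigma (fst ob) ** transpose (Zcoeff n l p ob))"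
    if "ob \<in> pair_obs l p q" for ob
    using that sub
    by (intro gaussian_moments4_vec_linear gaussian_moments4_vec_mvn prob_space_axioms Sigma_spd X_mvn)
      auto
  have "finite (pair_obs l p q)" by (simp add: pair_obs_def)
  from gaussian_moments4_vec_sum[OF this ind g]
  have "gaussian_moments4_vec M (\<lambda>w. \<Sum>ob\<in>pair_obs l p q. ?Y ob w)
      (\<Sum>ob\<in>pair_obs l p q. Zcoeff n l p ob ** Sigma (fst ob) ** transpose (Zcoeff n l p ob))" .
  moreover have "0 < n i" for i using l(2)[of i] by simp
  ultimately have "gaussian_moments4_vec M (\<lambda>w. \<Sum>ob\<in>pair_obs l p q. ?Y ob w) (2 *\<^sub>R VN n Sigma)"
    using sum_Zcoeff_sandwich[where l=l and p=p and q=q and n=n and Sigma=Sigma, OF l(1)] by simp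
  moreover have "Zvec n X l p q = (\<lambda>w. \<Sum>ob\<in>pair_obs l p q. ?Y ob w)"
  proof
    fix w
    show "Zvec n X l p q w = (\<Sum>ob\<in>pair_obs l p q. ?Y ob w)"
      using Zvec_eq_Zvec_of_obs[where S=UNIV and mu=mu and l=l and p=p and q=q, OF l(1)]
      by (simp add: Zvec_of_obs_def)
  qed
  ultimately show ?thesis by simp
qed

lemma distr_Zvec_triple:
  assumes l: "l \<in> six_tuples n"
  shows "distr M (borel \<Otimes>\<^sub>M (borel \<Otimes>\<^sub>M borel)) (\<lambda>w. (Zvec n X l 0 1 w, Zvec n X l 2 3 w, Zvec n X l 4 5 w))
       = distr M borel (Zvec n X l 0 1) \<Otimes>\<^sub>M (distr M borel (Zvec n X l 2 3) \<Otimes>\<^sub>M distr M borel (Zvec n X l 4 5))"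
proof -
  let ?R = "\<lambda>S w. restrict (\<lambda>ob. X (fst ob) (snd ob) w) S"
  let ?S = "pair_obs l"
  have sub: "?S p q \<subseteq> {(i, j). j < n i}" if "p < 6" "q < 6" for p q
    using that by (intro pair_obs_subset six_tuplesD(2)[OF l])
  have disj: "?S p q \<inter> ?S r s = {}" if "{p, q, r, s} \<subseteq> {..<6}" "{p, q} \<inter> {r, s} = {}" for p q r s
    using pair_obs_disjoint[OF six_tuplesD(1)[OF l] that] .
  have Z: "Zvec_of_obs n mu l p q (?R S w) = Zvec n X l p q w" if "p < 6" "q < 6" "p \<noteq> q" "?S p q \<subseteq> S"
    for p q S w
    using that six_tuplesD(3)[OF l] by (intro Zvec_eq_Zvec_of_obs[symmetric]) auto
  have "distr M (borel \<Otimes>\<^sub>M borel) (\<lambda>w. (Zvec_of_obs n mu l 2 3 (?R (?S 2 3) w),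
        Zvec_of_obs n mu l 4 5 (?R (?S 4 5) w)))
      = distr M borel (\<lambda>w. Zvec_of_obs n mu l 2 3 (?R (?S 2 3) w))
        \<Otimes>\<^sub>M distr M borel (\<lambda>w. Zvec_of_obs n mu l 4 5 (?R (?S 4 5) w))"
    by (rule distr_pair_disjoint_obs) (use sub disj in \<open>auto intro: borel_measurable_Zvec_of_obs\<close>)
  then have BC: "distr M (borel \<Otimes>\<^sub>M borel) (\<lambda>w. (Zvec n X l 2 3 w, Zvec n X l 4 5 w))
      = distr M borel (Zvec n X l 2 3) \<Otimes>\<^sub>M distr M borel (Zvec n X l 4 5)"
    by (simp add: Z)
  have "distr M (borel \<Otimes>\<^sub>M (borel \<Otimes>\<^sub>M borel)) (\<lambda>w. (Zvec_of_obs n mu l 0 1 (?R (?S 0 1) w),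
        (\<lambda>x. (Zvec_of_obs n mu l 2 3 x, Zvec_of_obs n mu l 4 5 x)) (?R (?S 2 3 \<union> ?S 4 5) w)))
      = distr M borel (\<lambda>w. Zvec_of_obs n mu l 0 1 (?R (?S 0 1) w))
        \<Otimes>\<^sub>M distr M (borel \<Otimes>\<^sub>M borel)
          (\<lambda>w. (\<lambda>x. (Zvec_of_obs n mu l 2 3 x, Zvec_of_obs n mu l 4 5 x)) (?R (?S 2 3 \<union> ?S 4 5) w))"
    using disj[of 0 1 2 3] disj[of 0 1 4 5] sub
    by (intro distr_pair_disjoint_obs) (auto intro!: borel_measurable_Zvec_of_obs measurable_Pair)
  then show ?thesis by (simp add: Z BC)
qed

lemma C5_term_moments:
  assumes l: "l \<in> six_tuples n" and TW: "transpose TW = TW" and TS: "transpose TS = TS"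
  defines "T \<equiv> kron TW TS" and "K \<equiv> 2 *\<^sub>R VN n Sigma"
  shows "integrable M (C5_term n X TW TS l)"
    and "(\<integral>w. C5_term n X TW TS l w \<partial>M) = trace (T ** K ** T ** K ** T ** K)"
    and "integrable M (\<lambda>w. (C5_term n X TW TS l w)^2)"
    and "(\<integral>w. (C5_term n X TW TS l w)^2 \<partial>M) \<le> 27 * (trace (T ** K ** T ** K))^3"
proof -
  have T: "transpose T = T" unfolding T_def by (simp add: transpose_kron TW TS)
  have K: "transpose K = K" unfolding K_def by (simp add: transpose_scalar transpose_VN_Sigma)
  have gm: "gaussian_moments4_vec M (Zvec n X l p q) K" if "p < 6" "q < 6" "p \<noteq> q" for p q
    unfolding K_def using that six_tuplesD(2,3)[OF l] by (intro gaussian_moments4_vec_Zvec) auto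
  have law: "gaussian_moments4_law (distr M borel (Zvec n X l p q)) K" if "p < 6" "q < 6" "p \<noteq> q" for p q
    by (rule gaussian_moments4_law_distr[OF gm[OF that] K])
  note A = law[of 0 1] and B = law[of 2 3] and C = law[of 4 5]
  let ?Z = "\<lambda>w. (Zvec n X l 0 1 w, Zvec n X l 2 3 w, Zvec n X l 4 5 w)"
  let ?H = "\<lambda>(a, b, c). cyclic_form T a b c"
  have [measurable]: "Zvec n X l p q \<in> borel_measurable M" if "p < 6" "q < 6" "p \<noteq> q" for p q
    using gm[OF that] by (simp add: gaussian_moments4_vec_def)
  have [measurable]: "?H \<in> borel_measurable (borel \<Otimes>\<^sub>M (borel \<Otimes>\<^sub>M borel))"
    unfolding cyclic_form_def by measurable
  have H: "C5_term n X TW TS l = (\<lambda>w. ?H (?Z w))"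
    by (simp add: fun_eq_iff C5_term_eq_cyclic_form T_def)
  note joint = distr_Zvec_triple[OF l]
  have "integrable (distr M (borel \<Otimes>\<^sub>M (borel \<Otimes>\<^sub>M borel)) ?Z) ?H"
    unfolding joint by (rule integrable_cyclic_form[OF A B C T]) simp_all
  then show "integrable M (C5_term n X TW TS l)"
    unfolding H by (subst (asm) integrable_distr_eq) auto
  have "(\<integral>w. ?H (?Z w) \<partial>M) = (\<integral>z. ?H z \<partial>distr M (borel \<Otimes>\<^sub>M (borel \<Otimes>\<^sub>M borel)) ?Z)"
    by (subst integral_distr) auto
  also have "\<dots> = trace (T ** K ** T ** K ** T ** K)"
    unfolding joint by (rule integral_cyclic_form[OF A B C T]) simp_all
  finally show "(\<integral>w. C5_term n X TW TS l w \<partial>M) = trace (T ** K ** T ** K ** T ** K)"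
    unfolding H .
  have "(\<integral>\<^sup>+w. ennreal ((?H (?Z w))^2) \<partial>M)
      = (\<integral>\<^sup>+z. ennreal ((?H z)^2) \<partial>distr M (borel \<Otimes>\<^sub>M (borel \<Otimes>\<^sub>M borel)) ?Z)"
    by (subst nn_integral_distr) auto
  also have "\<dots> \<le> ennreal (27 * (trace (T ** K ** T ** K))^3)"
    unfolding joint using nn_integral_cyclic_form_sq_le[OF A B C T] by (simp add: split_beta')
  finally have sq: "(\<integral>\<^sup>+w. ennreal ((C5_term n X TW TS l w)^2) \<partial>M) \<le> ennreal (27 * (trace (T ** K ** T ** K))^3)"
    unfolding H .
  have J: "0 \<le> 27 * (trace (T ** K ** T ** K))^3"
    using nn_integral_sandwich_law(2)[OF A T] by simp
  have [measurable]: "C5_term n X TW TS l \<in> borel_measurable M" unfolding H by measurable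
  show "integrable M (\<lambda>w. (C5_term n X TW TS l w)^2)"
    and "(\<integral>w. (C5_term n X TW TS l w)^2 \<partial>M) \<le> 27 * (trace (T ** K ** T ** K))^3"
    using integrable_sq_of_nn_integral_le[OF _ sq J] by simp_all
qed

lemma indep_var_C5_terms:
  assumes l: "l \<in> six_tuples n" and l': "l' \<in> six_tuples n"
    and disj: "\<And>i. l i ` {..<6} \<inter> l' i ` {..<6} = {}"
  shows "indep_var borel (C5_term n X TW TS l) borel (C5_term n X TW TS l')"
proof -
  let ?R = "\<lambda>S w. restrict (\<lambda>ob. X (fst ob) (snd ob) w) S"
  define F where "F l x = cyclic_form (kron TW TS) (Zvec_of_obs n mu l 0 1 x) (Zvec_of_obs n mu l 2 3 x)
      (Zvec_of_obs n mu l 4 5 x)" for l x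
  have F: "C5_term n X TW TS l w = F l (?R (tuple_obs l) w)" if "l \<in> six_tuples n" for l w
    using six_tuplesD(3)[OF that] unfolding C5_term_eq_cyclic_form F_def
    by (subst (1 2 3) Zvec_eq_Zvec_of_obs[where mu=mu and S="tuple_obs l"])
      (simp_all add: pair_obs_subset_tuple_obs)
  have "F l \<in> borel_measurable (PiM (tuple_obs l) (\<lambda>_. borel))" for l
    unfolding F_def cyclic_form_def
    by (intro borel_measurable_times borel_measurable_inner borel_measurable_matrix_vector_mult
        borel_measurable_Zvec_of_obs pair_obs_subset_tuple_obs) auto
  moreover have "tuple_obs l \<inter> tuple_obs l' = {}"
    using disj unfolding tuple_obs_def by auto
  ultimately have "indep_var borel (\<lambda>w. F l (?R (tuple_obs l) w)) borel (\<lambda>w. F l' (?R (tuple_obs l') w))"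
    using tuple_obs_subset[OF l] tuple_obs_subset[OF l'] by (intro indep_var_disjoint_obs) auto
  moreover have "C5_term n X TW TS l = (\<lambda>w. F l (?R (tuple_obs l) w))"
    and "C5_term n X TW TS l' = (\<lambda>w. F l' (?R (tuple_obs l') w))"
    using F[OF l] F[OF l'] by (simp_all add: fun_eq_iff)
  ultimately show ?thesis by simp
qed

end

section \<open>Mean and variance of \<open>C\<^sub>5\<close>\<close>

lemma trace_scaleR: "trace (c *\<^sub>R A) = c * trace (A :: real^'n^'n)"
  by (simp add: trace_def sum_distrib_left)

lemma trace_scaleR_cycles:
  fixes T V :: "real^'n^'n"
  shows "trace (T ** (c *\<^sub>R V) ** T ** (c *\<^sub>R V)) = c^2 * trace ((T ** V) ** (T ** V))"
    and "trace (T ** (c *\<^sub>R V) ** T ** (c *\<^sub>R V) ** T ** (c *\<^sub>R V))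
       = c^3 * trace ((T ** V) ** (T ** V) ** (T ** V))"
  by (simp_all add: matrix_scalar_ac scalar_matrix_assoc[symmetric] trace_scaleR matrix_mul_assoc
      power2_eq_square power3_eq_cube)

lemma real_card_six_tuples:
  assumes "\<And>i. 6 \<le> n i"
  shows "real (card (six_tuples n)) = (\<Prod>i\<in>UNIV. fact (n i) / fact (n i - 6))"
  by (simp add: card_six_tuples fact_binomial[OF assms])

lemma C5_eq_average:
  assumes "\<And>i. 6 \<le> n i"
  shows "C5 n X TW TS w = (\<Sum>l\<in>six_tuples n. C5_term n X TW TS l w) / (8 * real (card (six_tuples n)))"
  by (simp add: C5_def C5_term_def real_card_six_tuples[OF assms])

lemma card_dependent_pairs_ratio:
  assumes "\<And>i. 6 \<le> n i"
  shows "real (card (six_tuples n \<times> six_tuples n - disjoint_tuple_pairs n)) / real (card (six_tuples n))^2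
       = ((\<Prod>i\<in>UNIV. real (n i choose 6)) - (\<Prod>i\<in>UNIV. real ((n i - 6) choose 6)))
         / (\<Prod>i\<in>UNIV. real (n i choose 6))"
proof -
  let ?c = "\<Prod>i\<in>(UNIV::'a set). fact 6 :: real"
    and ?a = "\<Prod>i\<in>UNIV. real (n i choose 6)" and ?b = "\<Prod>i\<in>UNIV. real ((n i - 6) choose 6)"
  have L: "real (card (six_tuples n)) = ?c * ?a"
    by (simp add: card_six_tuples prod.distrib)
  have D: "real (card (disjoint_tuple_pairs n)) = (?c * ?a) * (?c * ?b)"
    by (simp add: card_disjoint_tuple_pairs prod.distrib mult_ac)
  have sub: "disjoint_tuple_pairs n \<subseteq> six_tuples n \<times> six_tuples n"
    by (auto simp: disjoint_tuple_pairs_def)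
  have "card (six_tuples n \<times> six_tuples n - disjoint_tuple_pairs n)
      = card (six_tuples n) * card (six_tuples n) - card (disjoint_tuple_pairs n)"
    using sub by (simp add: card_Diff_subset finite_subset finite_six_tuples card_cartesian_product)
  moreover have "card (disjoint_tuple_pairs n) \<le> card (six_tuples n) * card (six_tuples n)"
    using card_mono[OF _ sub] by (simp add: finite_six_tuples card_cartesian_product)
  moreover have "\<And>c a b :: real. c > 0 \<Longrightarrow> a > 0 \<Longrightarrow>
      (c * a * (c * a) - c * a * (c * b)) / (c * a)^2 = (a - b) / a"
    by (simp add: field_simps power2_eq_square)
  moreover have "?a > 0" using assms by (simp add: prod_pos)
  ultimately show ?thesis
    by (simp add: of_nat_diff L D)
qed

context gaussian_samples
begin

context
  fixes TW :: "real^'g^'g" and TS :: "real^'d^'d"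
  assumes TW: "transpose TW = TW" and TS: "transpose TS = TS" and n6: "\<And>i. 6 \<le> n i"
begin

lemma expectation_C5:
  "expectation (C5 n X TW TS)
     = trace ((kron TW TS ** VN n Sigma) ** (kron TW TS ** VN n Sigma) ** (kron TW TS ** VN n Sigma))"
proof -
  have "card (six_tuples n) > 0"
    using n6 by (simp add: card_six_tuples prod_pos)
  moreover have "expectation (C5_term n X TW TS l)
      = 8 * trace ((kron TW TS ** VN n Sigma) ** (kron TW TS ** VN n Sigma) ** (kron TW TS ** VN n Sigma))"
    if "l \<in> six_tuples n" for l
    using C5_term_moments(2)[OF that TW TS] by (simp add: trace_scaleR_cycles)
  ultimately show ?thesis
    unfolding C5_eq_average[OF n6]
    by (simp add: Bochner_Integration.integral_sum C5_term_moments(1)[OF _ TW TS])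
qed

lemma variance_C5_le:
  "variance (C5 n X TW TS)
     \<le> real (card (six_tuples n \<times> six_tuples n - disjoint_tuple_pairs n)) / real (card (six_tuples n))^2
       * 27 * (trace ((kron TW TS ** VN n Sigma) ** (kron TW TS ** VN n Sigma)))^3"
proof -
  let ?L = "six_tuples n" and ?h = "C5_term n X TW TS"
  let ?m = "8 * trace ((kron TW TS ** VN n Sigma) ** (kron TW TS ** VN n Sigma) ** (kron TW TS ** VN n Sigma))"
  let ?t = "trace ((kron TW TS ** VN n Sigma) ** (kron TW TS ** VN n Sigma))"
  have pos: "real (card ?L) > 0" using n6 by (simp add: card_six_tuples prod_pos)
  have "expectation (\<lambda>w. ((\<Sum>l\<in>?L. ?h l w) - real (card ?L) * ?m)^2)
      \<le> real (card (?L \<times> ?L - disjoint_tuple_pairs n)) * (27 * 64 * ?t^3)" (is "?E \<le> ?R")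
  proof (rule variance_sum_le)
    fix l assume l: "l \<in> ?L"
    show "integrable M (?h l)" and "integrable M (\<lambda>w. (?h l w)^2)"
      using C5_term_moments(1,3)[OF l TW TS] .
    show "expectation (?h l) = ?m"
      using C5_term_moments(2)[OF l TW TS] by (simp add: trace_scaleR_cycles)
    show "expectation (\<lambda>w. (?h l w)^2) \<le> 27 * 64 * ?t^3"
      using C5_term_moments(4)[OF l TW TS] by (simp add: trace_scaleR_cycles power_mult_distrib)
  qed (auto simp: finite_six_tuples disjoint_tuple_pairs_def intro: indep_var_C5_terms)
  then have "?E / (8 * real (card ?L))^2 \<le> ?R / (8 * real (card ?L))^2"
    by (rule divide_right_mono) simp
  moreover have "C5 n X TW TS w - expectation (C5 n X TW TS)
      = ((\<Sum>l\<in>?L. ?h l w) - real (card ?L) * ?m) / (8 * real (card ?L))" for w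
    using pos unfolding C5_eq_average[OF n6] expectation_C5 by (simp add: field_simps)
  then have "variance (C5 n X TW TS) = ?E / (8 * real (card ?L))^2"
    by (simp add: power_divide)
  ultimately have "variance (C5 n X TW TS) \<le> ?R / (8 * real (card ?L))^2"
    by simp
  also have "\<dots> = real (card (?L \<times> ?L - disjoint_tuple_pairs n)) / real (card ?L)^2 * 27 * ?t^3"
    by (simp add: power_mult_distrib)
  finally show ?thesis .
qed

end

end

theorem lemmaA13:
  fixes M :: "'w measure"
    and n :: "'g::finite \<Rightarrow> nat"
    and X :: "'g \<Rightarrow> nat \<Rightarrow> 'w \<Rightarrow> real^'d::finite"
    and mu :: "'g \<Rightarrow> real^'d"
    and Sigma :: "'g \<Rightarrow> real^'d^'d"
    and TW :: "real^'g^'g" and TS :: "real^'d^'d"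
  assumes "prob_space M"
    and "\<And>i. n i \<ge> 6"
    and "\<And>i. sym_pos_def_mat (Sigma i)"
    and "sym_idem_mat TW" and "sym_idem_mat TS"
    and "\<And>i j. j < n i \<Longrightarrow>
           distributed M lborel (X i j) (\<lambda>x. ennreal (mvn_density (mu i) (Sigma i) x))"
    and "prob_space.indep_vars M (\<lambda>_. borel) (\<lambda>(i, j). X i j) {(i, j). j < n i}"
  shows "integral\<^sup>L M (C5 n X TW TS) =
           trace ((kron TW TS ** VN n Sigma) ** (kron TW TS ** VN n Sigma) ** (kron TW TS ** VN n Sigma)) \<and>
         integral\<^sup>L M (\<lambda>w. (C5 n X TW TS w - integral\<^sup>L M (C5 n X TW TS))\<^sup>2)
         \<le> ((\<Prod>i\<in>UNIV. real (n i choose 6)) - (\<Prod>i\<in>UNIV. real ((n i - 6) choose 6)))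
              / (\<Prod>i\<in>UNIV. real (n i choose 6))
           * 27 * (trace ((kron TW TS ** VN n Sigma) ** (kron TW TS ** VN n Sigma))) ^ 3"
proof -
  interpret gaussian_samples M n X mu Sigma
    using assms(1,3,6,7) by (simp add: gaussian_samples_def gaussian_samples_axioms_def)
  have TW: "transpose TW = TW" and TS: "transpose TS = TS"
    using assms(4,5) by (simp_all add: sym_idem_mat_def)
  show ?thesis
    using expectation_C5[OF TW TS assms(2)]
      variance_C5_le[OF TW TS assms(2), unfolded card_dependent_pairs_ratio[of n, OF assms(2)]]
    by simp
qed

end
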